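(* Let $h:(0,\infty)\to\mathbb{R}$ be of class $C^{n+2}$. Then the Laplace–Beltrami operator $\Delta_{LB}=R^2\nabla^2-\mathbb{E}(M-2+\mathbb{E})$ commutes with multiplication by $h(R^2)$: $[\Delta_{LB},h(R^2)]=0$.
   Context: Fix integers $m\ge1$, $n\ge0$ and put $M=m-2n$. Let $\Lambda_{2n}$ be the complex Grassmann algebra generated by anticommuting variables ${x\grave{}}_1,\dots,{x\grave{}}_{2n}$; superfunctions are functions $f=\sum_A {x\grave{}}_Af_A$ on open subsets of $\mathbb{R}^m$ with $\mathbb{C}$-valued coefficients, ${x\grave{}}_A$ running over the monomials of $\Lambda_{2n}$. Bosonic coordinates $x_1,\dots,x_m$, $r^2=\sum x_i^2$. Fermionic derivatives $\partial_{{x\grave{}}_j}$ commute with the $x_i$ and satisfy $\partial_{{x\grave{}}_j}({x\grave{}}_k g)=\delta_{jk}g-{x\grave{}}_k\partial_{{x\grave{}}_j}g$. Put $\underline{x}\grave{}^2=\sum_{j=1}^n{x\grave{}}_{2j-1}{x\grave{}}_{2j}$, $R^2=r^2-\underline{x}\grave{}^2$. For $h\in C^n((0,\infty))$, $h(R^2)=\sum_{j=0}^n(-1)^j\frac{\underline{x}\grave{}^{2j}}{j!}h^{(j)}(r^2)$. The super Laplace operator is $\nabla^2=\sum_{i=1}^m\partial_{x_i}^2-4\sum_{j=1}^n\partial_{{x\grave{}}_{2j-1}}\partial_{{x\grave{}}_{2j}}$ and the super Euler operator is $\mathbb{E}=\sum_{i=1}^m x_i\partial_{x_i}+\sum_{j=1}^{2n}{x\grave{}}_j\partial_{{x\grave{}}_j}$.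 *)

theory Defs
  imports "HOL-Analysis.Analysis"
begin

text \<open>Superfunctions on an open subset of R^m (m = CARD('m)) with values in the
  complex Grassmann algebra generated by xg_1, ..., xg_2n.  A superfunction is
  represented by its coefficient family: the coefficient of the ordered monomial
  xg_A (A a finite subset of {1..2n}, product in increasing order) is f A.\<close>

type_synonym 'm sfun = "nat set \<Rightarrow> real^'m \<Rightarrow> complex"

definition gens :: "nat \<Rightarrow> nat set" where
  "gens n = {1..2*n}"

definition wf_sfun :: "nat \<Rightarrow> 'm sfun \<Rightarrow> bool" where
  "wf_sfun n f \<longleftrightarrow> (\<forall>A x. \<not> A \<subseteq> gens n \<longrightarrow> f A x = 0)"

definition pd :: "'m::finite \<Rightarrow> (real^'m \<Rightarrow> complex) \<Rightarrow> real^'m \<Rightarrow> complex" where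
  "pd i g x = vector_derivative (\<lambda>t. g (x + t *\<^sub>R axis i 1)) (at 0)"

fun ck_on :: "nat \<Rightarrow> (real^'m::finite) set \<Rightarrow> (real^'m \<Rightarrow> complex) \<Rightarrow> bool" where
  "ck_on 0 S g = continuous_on S g"
| "ck_on (Suc k) S g = ((\<forall>x\<in>S. g differentiable (at x)) \<and> (\<forall>i. ck_on k S (pd i g)))"

fun ck_real :: "nat \<Rightarrow> real set \<Rightarrow> (real \<Rightarrow> real) \<Rightarrow> bool" where
  "ck_real 0 S h = continuous_on S h"
| "ck_real (Suc k) S h = ((\<forall>t\<in>S. h differentiable (at t)) \<and> ck_real k S (deriv h))"

text \<open>sign of the product xg_A xg_B of ordered monomials (A, B disjoint)\<close>
definition gsign :: "nat set \<Rightarrow> nat set \<Rightarrow> complex" where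
  "gsign A B = (-1) ^ card {(a, b). a \<in> A \<and> b \<in> B \<and> b < a}"

definition sf_add :: "'m sfun \<Rightarrow> 'm sfun \<Rightarrow> 'm sfun" where
  "sf_add f g = (\<lambda>A x. f A x + g A x)"

definition sf_scale :: "complex \<Rightarrow> 'm sfun \<Rightarrow> 'm sfun" where
  "sf_scale c f = (\<lambda>A x. c * f A x)"

definition sf_sum :: "nat set \<Rightarrow> (nat \<Rightarrow> 'm sfun) \<Rightarrow> 'm sfun" where
  "sf_sum I F = (\<lambda>A x. \<Sum>i\<in>I. F i A x)"

definition sf_sumb :: "('m::finite \<Rightarrow> 'm sfun) \<Rightarrow> 'm sfun" where
  "sf_sumb F = (\<lambda>A x. \<Sum>i\<in>UNIV. F i A x)"

definition sf_mult :: "'m sfun \<Rightarrow> 'm sfun \<Rightarrow> 'm sfun" where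
  "sf_mult f g = (\<lambda>C x. \<Sum>A | A \<subseteq> C. gsign A (C - A) * f A x * g (C - A) x)"

definition sf_one :: "'m sfun" where
  "sf_one = (\<lambda>A x. if A = {} then 1 else 0)"

definition sf_scal :: "(real^'m \<Rightarrow> complex) \<Rightarrow> 'm sfun" where
  "sf_scal \<phi> = (\<lambda>A x. if A = {} then \<phi> x else 0)"

primrec sf_pow :: "'m sfun \<Rightarrow> nat \<Rightarrow> 'm sfun" where
  "sf_pow f 0 = sf_one"
| "sf_pow f (Suc k) = sf_mult f (sf_pow f k)"

text \<open>left multiplication by the generator xg_j\<close>
definition xg :: "nat \<Rightarrow> 'm sfun \<Rightarrow> 'm sfun" where
  "xg j f = (\<lambda>B x. if j \<in> B then (-1) ^ card {a \<in> B. a < j} * f (B - {j}) x else 0)"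

text \<open>fermionic derivative d/dxg_j\<close>
definition dg :: "nat \<Rightarrow> 'm sfun \<Rightarrow> 'm sfun" where
  "dg j f = (\<lambda>B x. if j \<notin> B then (-1) ^ card {a \<in> B. a < j} * f (insert j B) x else 0)"

definition xb :: "'m::finite \<Rightarrow> 'm sfun \<Rightarrow> 'm sfun" where
  "xb i f = (\<lambda>A x. complex_of_real (x $ i) * f A x)"

definition db :: "'m::finite \<Rightarrow> 'm sfun \<Rightarrow> 'm sfun" where
  "db i f = (\<lambda>A. pd i (f A))"

definition xgsq :: "nat \<Rightarrow> 'm sfun" where
  "xgsq n = sf_sum {1..n} (\<lambda>j. xg (2*j - 1) (xg (2*j) sf_one))"

definition rsq :: "real^'m::finite \<Rightarrow> real" where
  "rsq x = (\<Sum>i\<in>UNIV. (x $ i)^2)"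

definition hR2 :: "nat \<Rightarrow> (real \<Rightarrow> real) \<Rightarrow> 'm::finite sfun" where
  "hR2 n h = sf_sum {0..n} (\<lambda>j. sf_scale ((-1) ^ j / of_nat (fact j))
      (sf_mult (sf_pow (xgsq n) j) (sf_scal (\<lambda>x. complex_of_real (((deriv ^^ j) h) (rsq x))))))"

definition mulR2 :: "nat \<Rightarrow> 'm::finite sfun \<Rightarrow> 'm sfun" where
  "mulR2 n f = sf_add (\<lambda>A x. complex_of_real (rsq x) * f A x) (sf_scale (-1) (sf_mult (xgsq n) f))"

definition super_laplace :: "nat \<Rightarrow> 'm::finite sfun \<Rightarrow> 'm sfun" where
  "super_laplace n f = sf_add (sf_sumb (\<lambda>i. db i (db i f)))
      (sf_scale (-4) (sf_sum {1..n} (\<lambda>j. dg (2*j - 1) (dg (2*j) f))))"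

definition super_euler :: "nat \<Rightarrow> 'm::finite sfun \<Rightarrow> 'm sfun" where
  "super_euler n f = sf_add (sf_sumb (\<lambda>i. xb i (db i f)))
      (sf_sum {1..2*n} (\<lambda>j. xg j (dg j f)))"

definition laplace_beltrami :: "nat \<Rightarrow> 'm::finite sfun \<Rightarrow> 'm sfun" where
  "laplace_beltrami n f =
     (let M = int CARD('m) - 2 * int n in
      sf_add (mulR2 n (super_laplace n f))
        (sf_scale (-1) (super_euler n (sf_add (sf_scale (of_int (M - 2)) f) (super_euler n f)))))"

end

theory Submission
  imports Defs
begin

text \<open>Multiplication by \<open>r\<^sup>2\<close>, by \<open>x\<grave>\<^sup>2\<close> and by \<open>h(R\<^sup>2)\<close> are all instances of multiplication by a
  "radial" superfunction \<open>\<Sum>\<^sub>J G\<^sub>|\<^sub>J\<^sub>|(r\<^sup>2) x\<grave>\<^sub>J\<close>, \<open>J\<close> running over sets of pairs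
  \<open>x\<grave>\<^sub>2\<^sub>j\<^sub>-\<^sub>1 x\<grave>\<^sub>2\<^sub>j\<close>; for \<open>h(R\<^sup>2)\<close> the coefficients are \<open>G\<^sub>l = (-1)\<^sup>l h\<^sup>(\<^sup>l\<^sup>)\<close>, so that
  \<open>G\<^sub>l' = -G\<^sub>l\<^sub>+\<^sub>1\<close>. The commutators \<open>[E, h(R\<^sup>2)] = 2R\<^sup>2 h'(R\<^sup>2)\<close> and \<open>[\<nabla>\<^sup>2, h(R\<^sup>2)]\<close> are
  computed coefficientwise: the chain rule handles the bosonic derivatives, and counting pairs
  handles the fermionic parts of \<open>\<nabla>\<^sup>2\<close> and \<open>E\<close>. Then
  \<open>[\<Delta>\<^sub>L\<^sub>B, h(R\<^sup>2)] = R\<^sup>2[\<nabla>\<^sup>2, h] - [E, h](M - 2 + 2E) - [E, [E, h]]\<close>, and this vanishes by an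
  identity between coefficient families that only uses \<open>G\<^sub>l' = -G\<^sub>l\<^sub>+\<^sub>1\<close>.\<close>

section \<open>Bosonic partial derivatives\<close>

lemma pd_has_derivative:
  fixes g :: "real^'m::finite \<Rightarrow> complex"
  assumes "(g has_derivative g') (at x)"
  shows "pd i g x = g' (axis i 1)"
proof -
  have line: "((\<lambda>t::real. x + t *\<^sub>R axis i 1) has_derivative (\<lambda>t. t *\<^sub>R axis i 1)) (at 0)"
    by (auto intro!: derivative_eq_intros)
  have "((\<lambda>t. g (x + t *\<^sub>R axis i 1)) has_derivative (\<lambda>t. g' (t *\<^sub>R axis i 1))) (at 0)"
    using has_derivative_compose[OF line] assms by simp
  moreover have "(\<lambda>t. g' (t *\<^sub>R axis i 1)) = (\<lambda>t. t *\<^sub>R g' (axis i 1))"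
    using has_derivative_bounded_linear[OF assms]
        by (simp add: linear.scaleR[OF bounded_linear.linear])
  ultimately have "((\<lambda>t. g (x + t *\<^sub>R axis i 1)) has_vector_derivative g' (axis i 1)) (at 0)"
    by (simp add: has_vector_derivative_def)
  then show ?thesis unfolding pd_def by (rule vector_derivative_at)
qed

lemma pd_cong_open:
  fixes g g' :: "real^'m::finite \<Rightarrow> complex"
  assumes "open S" "x \<in> S" "\<And>y. y \<in> S \<Longrightarrow> g y = g' y"
  shows "pd i g x = pd i g' x"
proof -
  let ?l = "\<lambda>t::real. x + t *\<^sub>R axis i 1"
  have T: "open (?l -` S)"
    by (rule continuous_open_vimage[OF assms(1)]) (intro continuous_intros)
  have 0: "0 \<in> ?l -` S" using assms(2) by simp
  have "((\<lambda>t. g (?l t)) has_vector_derivative D) (at 0)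
      \<longleftrightarrow> ((\<lambda>t. g' (?l t)) has_vector_derivative D) (at 0)" for D
    using has_vector_derivative_transform_within_open[OF _ T 0, of "\<lambda>t. g (?l t)" D "\<lambda>t. g' (?l t)"]
      has_vector_derivative_transform_within_open[OF _ T 0, of "\<lambda>t. g' (?l t)" D "\<lambda>t. g (?l t)"]
      assms(3) by auto
  then show ?thesis unfolding pd_def vector_derivative_def by simp
qed

lemma pd_const: "pd i (\<lambda>y::real^'m::finite. c::complex) x = 0"
  by (rule pd_has_derivative[where g'="\<lambda>_. 0", simplified]) simp

lemma pd_add:
  fixes a b :: "real^'m::finite \<Rightarrow> complex"
  assumes "a differentiable (at x)" "b differentiable (at x)"
  shows "pd i (\<lambda>y. a y + b y) x = pd i a x + pd i b x"
proof -
  obtain a' b' where a: "(a has_derivative a') (at x)" and b: "(b has_derivative b') (at x)"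
    using assms differentiable_def by blast
  show ?thesis
    using pd_has_derivative[OF has_derivative_add[OF a b]] pd_has_derivative[OF a]
        pd_has_derivative[OF b]
    by simp
qed

lemma pd_mult:
  fixes a b :: "real^'m::finite \<Rightarrow> complex"
  assumes "a differentiable (at x)" "b differentiable (at x)"
  shows "pd i (\<lambda>y. a y * b y) x = pd i a x * b x + a x * pd i b x"
proof -
  obtain a' b' where a: "(a has_derivative a') (at x)" and b: "(b has_derivative b') (at x)"
    using assms differentiable_def by blast
  show ?thesis
    using pd_has_derivative[OF has_derivative_mult[OF a b]] pd_has_derivative[OF a]
        pd_has_derivative[OF b]
    by (simp add: algebra_simps)
qed

lemma pd_sum:
  fixes a :: "'j \<Rightarrow> real^'m::finite \<Rightarrow> complex"
  assumes "finite S" "\<And>j. j \<in> S \<Longrightarrow> a j differentiable (at x)"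
  shows "pd i (\<lambda>y. \<Sum>j\<in>S. a j y) x = (\<Sum>j\<in>S. pd i (a j) x)"
  using assms
proof (induction S rule: finite_induct)
  case (insert j S)
  have "(\<lambda>y. \<Sum>j\<in>S. a j y) differentiable (at x)"
    using insert by (intro differentiable_sum) auto
  then show ?case using insert pd_add[of "a j" x "\<lambda>y. \<Sum>j\<in>S. a j y" i] by simp
qed (simp add: pd_const)

lemma rsq_eq_inner: "rsq y = y \<bullet> y"
  by (simp add: rsq_def inner_vec_def power2_eq_square)

lemma rsq_pos: "y \<noteq> 0 \<Longrightarrow> rsq y > 0"
  by (simp add: rsq_eq_inner)

lemma has_derivative_radial:
  assumes "(G has_real_derivative G') (at (rsq x))"
  shows "((\<lambda>y. complex_of_real (G (rsq y))) has_derivative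
           (\<lambda>v. complex_of_real (G' * (2 * (x \<bullet> v))))) (at x)"
proof -
  have "(rsq has_derivative (\<lambda>v. 2 * (x \<bullet> v))) (at x)"
    unfolding rsq_eq_inner[abs_def]
    by (auto intro!: derivative_eq_intros simp: inner_commute)
  from has_derivative_compose[OF this] assms
  have "((\<lambda>y. G (rsq y)) has_derivative (\<lambda>v. G' * (2 * (x \<bullet> v)))) (at x)"
    by (simp add: has_field_derivative_def)
  then show ?thesis by (rule has_derivative_of_real)
qed

lemma differentiable_radial:
  "(G has_real_derivative G') (at (rsq x))
      \<Longrightarrow> (\<lambda>y. complex_of_real (G (rsq y))) differentiable (at x)"
  using has_derivative_radial differentiable_def by blast

lemma pd_radial:
  "(G has_real_derivative G') (at (rsq x)) \<Longrightarrow>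
    pd i (\<lambda>y. complex_of_real (G (rsq y))) x = complex_of_real (2 * x$i * G')"
  using pd_has_derivative[OF has_derivative_radial, of G G' x i] by (simp add: inner_axis)

lemma has_derivative_coord:
  "((\<lambda>y::real^'m::finite. complex_of_real (c * y$i)) has_derivative
      (\<lambda>v. complex_of_real (c * v$i))) (at x)"
  by (auto intro!: derivative_eq_intros bounded_linear.has_derivative[OF bounded_linear_vec_nth])

lemma differentiable_coord: "(\<lambda>y::real^'m::finite. complex_of_real (c * y$i)) differentiable (at x)"
  using has_derivative_coord differentiable_def by blast

lemma pd_coord: "pd i (\<lambda>y::real^'m::finite. complex_of_real (c * y$i)) x = complex_of_real c"
  using pd_has_derivative[OF has_derivative_coord, of i c i x] by simp

section \<open>Pairs of fermionic generators\<close>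

text \<open>For \<open>j \<ge> 1\<close>, \<open>gen_pair j\<close> indexes the factors of \<open>x\<grave>\<^sub>2\<^sub>j\<^sub>-\<^sub>1 x\<grave>\<^sub>2\<^sub>j\<close> in \<open>x\<grave>\<^sup>2\<close>;
  truncated subtraction makes \<open>gen_pair 0 = {0}\<close>, whence the hypotheses \<open>0 \<notin> J\<close> below.\<close>

definition gen_pair :: "nat \<Rightarrow> nat set" where
  "gen_pair j = {2*j - 1, 2*j}"

definition gen_pairs :: "nat set \<Rightarrow> nat set" where
  "gen_pairs J = \<Union> (gen_pair ` J)"

definition pair_subsets :: "nat \<Rightarrow> nat set \<Rightarrow> nat set set" where
  "pair_subsets n B = {J. J \<subseteq> {1..n} \<and> gen_pairs J \<subseteq> B}"

lemma finite_gen_pair [simp]: "finite (gen_pair j)"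
  by (simp add: gen_pair_def)

lemma card_gen_pair: "j \<ge> 1 \<Longrightarrow> card (gen_pair j) = 2"
  by (simp add: gen_pair_def)

lemma mem_gen_pair_iff: "j \<ge> 1 \<Longrightarrow> a \<in> gen_pair j \<longleftrightarrow> a \<ge> 1 \<and> (a + 1) div 2 = j"
  unfolding gen_pair_def by auto

lemma mem_gen_pairs_iff: "0 \<notin> J \<Longrightarrow> a \<in> gen_pairs J \<longleftrightarrow> a \<ge> 1 \<and> (a + 1) div 2 \<in> J"
proof -
  assume J: "0 \<notin> J"
  have "a \<in> gen_pairs J \<longleftrightarrow> (\<exists>j\<in>J. a \<in> gen_pair j)" by (simp add: gen_pairs_def)
  also have "\<dots> \<longleftrightarrow> a \<ge> 1 \<and> (a + 1) div 2 \<in> J"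
    using J mem_gen_pair_iff by (metis less_one not_less)
  finally show ?thesis .
qed

lemma gen_pairs_empty [simp]: "gen_pairs {} = {}"
  by (simp add: gen_pairs_def)

lemma gen_pairs_singleton: "gen_pairs {j} = gen_pair j"
  by (simp add: gen_pairs_def)

lemma gen_pairs_insert: "gen_pairs (insert j K) = gen_pair j \<union> gen_pairs K"
  by (simp add: gen_pairs_def)

lemma gen_pairs_Un: "gen_pairs (J \<union> K) = gen_pairs J \<union> gen_pairs K"
  by (simp add: gen_pairs_def)

lemma gen_pairs_Diff: "0 \<notin> J \<Longrightarrow> 0 \<notin> K \<Longrightarrow> gen_pairs (J - K) = gen_pairs J - gen_pairs K"
  by (auto simp: mem_gen_pairs_iff)

lemma gen_pairs_subset_iff: "0 \<notin> J \<Longrightarrow> 0 \<notin> K \<Longrightarrow> gen_pairs J \<subseteq> gen_pairs K \<longleftrightarrow> J \<subseteq> K"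
proof
  assume J: "0 \<notin> J" and K: "0 \<notin> K" and sub: "gen_pairs J \<subseteq> gen_pairs K"
  show "J \<subseteq> K"
  proof
    fix j assume "j \<in> J"
    moreover have "j \<ge> 1" using J \<open>j \<in> J\<close> by (cases j) auto
    ultimately have "2*j \<in> gen_pairs J" using J mem_gen_pairs_iff by auto
    then show "j \<in> K" using sub K mem_gen_pairs_iff by auto
  qed
qed (auto simp: gen_pairs_def)

lemma gen_pairs_eq_iff: "0 \<notin> J \<Longrightarrow> 0 \<notin> K \<Longrightarrow> gen_pairs J = gen_pairs K \<longleftrightarrow> J = K"
  by (metis gen_pairs_subset_iff subset_antisym order_refl)

lemma gen_pairs_disjoint_iff: "0 \<notin> J \<Longrightarrow> 0 \<notin> K \<Longrightarrow> gen_pairs J \<inter> gen_pairs K = {} \<longleftrightarrow> J \<inter> K = {}"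
  using gen_pairs_Diff[of J K] gen_pairs_subset_iff[of J "J - K"] by blast

lemma gen_pair_disjoint_gen_pairs_iff:
  "0 \<notin> J \<Longrightarrow> j \<ge> 1 \<Longrightarrow> gen_pair j \<inter> gen_pairs J = {} \<longleftrightarrow> j \<notin> J"
  using gen_pairs_disjoint_iff[of J "{j}"] by (auto simp: gen_pairs_def)

lemma finite_gen_pairs [simp]: "finite J \<Longrightarrow> finite (gen_pairs J)"
  by (simp add: gen_pairs_def)

lemma card_gen_pairs: "finite J \<Longrightarrow> 0 \<notin> J \<Longrightarrow> card (gen_pairs J) = 2 * card J"
proof (induction J rule: finite_induct)
  case (insert j J)
  then have "gen_pair j \<inter> gen_pairs J = {}" "j \<ge> 1"
    using gen_pair_disjoint_gen_pairs_iff[of J j] by auto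
  with insert show ?case by (simp add: gen_pairs_insert card_Un_disjoint card_gen_pair)
qed simp

lemma gens_eq_gen_pairs: "gens n = gen_pairs {1..n}"
  by (auto simp: gens_def mem_gen_pairs_iff)

lemma gen_pairs_subset_gens: "J \<subseteq> {1..n} \<Longrightarrow> gen_pairs J \<subseteq> gens n"
  by (auto simp: gens_eq_gen_pairs gen_pairs_def)

lemma finite_gens [simp]: "finite (gens n)"
  by (simp add: gens_def)

lemma finite_pair_subsets [simp]: "finite (pair_subsets n B)"
  by (rule finite_subset[of _ "Pow {1..n}"]) (auto simp: pair_subsets_def)

lemma pair_subsetsD:
  assumes "J \<in> pair_subsets n B"
  shows "J \<subseteq> {1..n}" "gen_pairs J \<subseteq> B" "finite J" "0 \<notin> J" "card J \<le> n"
  using assms card_mono[of "{1..n}" J] by (auto simp: pair_subsets_def intro: finite_subset)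

lemma card_gens_Diff_gen_pairs:
  assumes "J \<in> pair_subsets n B"
  shows "card (B \<inter> gens n) = card ((B - gen_pairs J) \<inter> gens n) + 2 * card J"
proof -
  note J = pair_subsetsD[OF assms]
  have sub: "gen_pairs J \<subseteq> B \<inter> gens n" using J gen_pairs_subset_gens by auto
  have "(B - gen_pairs J) \<inter> gens n = (B \<inter> gens n) - gen_pairs J" by auto
  then show ?thesis
    using card_Diff_subset[OF _ sub] card_mono[OF _ sub] card_gen_pairs[OF J(3,4)] J(3) by simp
qed

text \<open>Each pair \<open>x\<grave>\<^sub>2\<^sub>j\<^sub>-\<^sub>1x\<grave>\<^sub>2\<^sub>j\<close> is even: a generator outside the pairs is
  smaller than both or larger than both of its members, so inversions come in twos.\<close>

lemma gsign_gen_pairs: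
  assumes "finite D" "finite J" "0 \<notin> J" "D \<inter> gen_pairs J = {}"
  shows "gsign (gen_pairs J) D = 1"
proof -
  let ?S = "{(a, b). a \<in> gen_pairs J \<and> b \<in> D \<and> b < a}"
  have "?S = (\<lambda>(b, a). (a, b)) ` (SIGMA b:D. {a \<in> gen_pairs J. b < a})" by auto
  then have "card ?S = card (SIGMA b:D. {a \<in> gen_pairs J. b < a})"
    by (metis (no_types, lifting) card_image inj_on_def old.prod.case prod.inject prod.collapse)
  also have "\<dots> = (\<Sum>b\<in>D. card {a \<in> gen_pairs J. b < a})"
    using assms(1,2) by (intro card_SigmaI) auto
  also have "\<dots> = (\<Sum>b\<in>D. 2 * card {j \<in> J. b < 2*j - 1})"
  proof (rule sum.cong[OF refl])
    fix b assume "b \<in> D"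
    then have b: "\<forall>j\<in>J. b \<noteq> 2*j - 1 \<and> b \<noteq> 2*j"
      using assms(4) by (auto simp: gen_pairs_def gen_pair_def)
    have "{a \<in> gen_pairs J. b < a} = gen_pairs {j \<in> J. b < 2*j - 1}"
    proof
      show "{a \<in> gen_pairs J. b < a} \<subseteq> gen_pairs {j \<in> J. b < 2*j - 1}"
      proof
        fix a assume "a \<in> {a \<in> gen_pairs J. b < a}"
        then obtain j where j: "j \<in> J" "a \<in> gen_pair j" "b < a" by (auto simp: gen_pairs_def)
        with b have "b < 2*j - 1" by (auto simp: gen_pair_def)
        with j show "a \<in> gen_pairs {j \<in> J. b < 2*j - 1}" by (auto simp: gen_pairs_def)
      qed
    qed (auto simp: gen_pairs_def gen_pair_def)
    then show "card {a \<in> gen_pairs J. b < a} = 2 * card {j \<in> J. b < 2*j - 1}"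
      using card_gen_pairs[of "{j \<in> J. b < 2*j - 1}"] assms(2,3) by auto
  qed
  finally have "even (card ?S)" by (simp add: sum_distrib_left[symmetric])
  then show ?thesis by (simp add: gsign_def)
qed

section \<open>Radial superfunctions\<close>

text \<open>\<open>radial_mult n G\<close> is multiplication by \<open>\<Sum>\<^sub>J G |J| (r\<^sup>2) x\<grave>\<^sub>J\<close>, with \<open>J\<close> ranging over
  sets of pairs and \<open>x\<grave>\<^sub>J\<close> the product of their generators (see \<open>sf_mult_radial_mult_one\<close>).\<close>

definition radial_mult :: "nat \<Rightarrow> (nat \<Rightarrow> real \<Rightarrow> real) \<Rightarrow> 'm::finite sfun \<Rightarrow> 'm sfun" where
  "radial_mult n G u = (\<lambda>B x. if finite B then
     (\<Sum>J\<in>pair_subsets n B. complex_of_real (G (card J) (rsq x)) * u (B - gen_pairs J) x) else 0)"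

lemma radial_mult_finite_eq: "finite B \<Longrightarrow> radial_mult n G u B
    = (\<lambda>y. \<Sum>J\<in>pair_subsets n B. complex_of_real (G (card J) (rsq y)) * u (B - gen_pairs J) y)"
  by (intro ext) (simp add: radial_mult_def)

lemma radial_mult_infinite_eq: "infinite B \<Longrightarrow> radial_mult n G u B = (\<lambda>y. 0)"
  by (intro ext) (simp add: radial_mult_def)

lemma radial_mult_add: "radial_mult n G (\<lambda>A y. a A y + b A y) B x
    = radial_mult n G a B x + radial_mult n G b B x"
  by (simp add: radial_mult_def sum.distrib algebra_simps)

lemma radial_mult_diff: "radial_mult n G (\<lambda>A y. a A y - b A y) B x
    = radial_mult n G a B x - radial_mult n G b B x"
  by (simp add: radial_mult_def sum_subtractf algebra_simps)

lemma radial_mult_cmult: "radial_mult n G (\<lambda>A y. c * a A y) B x = c * radial_mult n G a B x"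
  by (simp add: radial_mult_def sum_distrib_left algebra_simps)

lemma radial_mult_coeffs_add:
  "radial_mult n G u B x + radial_mult n K u B x = radial_mult n (\<lambda>l t. G l t + K l t) u B x"
  by (simp add: radial_mult_def sum.distrib algebra_simps)

lemma radial_mult_cong: "(\<And>B. w B x = w' B x) \<Longrightarrow> radial_mult n G w A x = radial_mult n G w' A x"
  by (simp add: radial_mult_def)

lemma radial_mult_sum:
  "radial_mult n G (\<lambda>B y. \<Sum>i\<in>I. a i y * w i B y) B x = (\<Sum>i\<in>I. a i x * radial_mult n G (w i) B x)"
  by (simp add: radial_mult_def sum_distrib_left sum_distrib_right algebra_simps sum.swap[of _ I])

lemma radial_mult_rsq: "radial_mult n (\<lambda>l t. c * t * G l t) u B x
    = complex_of_real (c * rsq x) * radial_mult n G u B x"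
  by (simp add: radial_mult_def sum_distrib_left algebra_simps)

lemma radial_mult_rsq_left:
  "radial_mult n G (\<lambda>B y. complex_of_real (rsq y) * g B y) A x
      = complex_of_real (rsq x) * radial_mult n G g A x"
  by (simp add: radial_mult_def sum_distrib_left algebra_simps)

lemma radial_mult_one_eq_sum:
  assumes "finite C" "A \<subseteq> C"
  shows "radial_mult n G sf_one A x
      = (\<Sum>J\<in>pair_subsets n C. if gen_pairs J = A then complex_of_real (G (card J) (rsq x)) else 0)"
proof -
  have fA: "finite A" using assms finite_subset by blast
  have "radial_mult n G sf_one A x
      = (\<Sum>J\<in>pair_subsets n A. if gen_pairs J = A then complex_of_real (G (card J) (rsq x)) else 0)"
    unfolding radial_mult_def sf_one_def using fA
    by (auto intro!: sum.cong simp: pair_subsets_def)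
  also have "\<dots> = (\<Sum>J\<in>pair_subsets n C. if gen_pairs J
      = A then complex_of_real (G (card J) (rsq x)) else 0)"
    using assms(2) by (intro sum.mono_neutral_left) (auto simp: pair_subsets_def)
  finally show ?thesis .
qed

lemma sf_mult_radial_mult_one: "sf_mult (radial_mult n G sf_one) u = radial_mult n G u"
proof (intro ext)
  fix C x
  show "sf_mult (radial_mult n G sf_one) u C x = radial_mult n G u C x"
  proof (cases "finite C")
    case False
    then have "infinite {A. A \<subseteq> C}" using finite_Pow_iff[of C] by (simp add: Pow_def)
    then show ?thesis using False by (simp add: sf_mult_def radial_mult_def)
  next
    case True
    have fP: "finite {A. A \<subseteq> C}" using True finite_Pow_iff[of C] by (simp add: Pow_def)
    have "sf_mult (radial_mult n G sf_one) u C x =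
      (\<Sum>A\<in>{A. A \<subseteq> C}. \<Sum>J\<in>pair_subsets n C. if gen_pairs J
          = A then gsign A (C - A) * complex_of_real (G (card J) (rsq x)) * u (C - A) x else 0)"
      unfolding sf_mult_def
      by (intro sum.cong refl)
          (auto simp: radial_mult_one_eq_sum[OF True] sum_distrib_left sum_distrib_right
              if_distrib intro!: sum.cong)
    also have "\<dots> = (\<Sum>J\<in>pair_subsets n C. \<Sum>A\<in>{A. A \<subseteq> C}. if gen_pairs J
        = A then gsign A (C - A) * complex_of_real (G (card J) (rsq x)) * u (C - A) x else 0)"
      by (rule sum.swap)
    also have "\<dots> = (\<Sum>J\<in>pair_subsets n C. gsign (gen_pairs J) (C - gen_pairs J)
        * complex_of_real (G (card J) (rsq x)) * u (C - gen_pairs J) x)"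
      using fP by (intro sum.cong refl) (auto simp: pair_subsets_def)
    also have "\<dots> = radial_mult n G u C x"
    proof -
      have "gsign (gen_pairs J) (C - gen_pairs J) = 1" if "J \<in> pair_subsets n C" for J
        using pair_subsetsD[OF that] True by (intro gsign_gen_pairs) auto
      then show ?thesis unfolding radial_mult_def using True by (auto intro!: sum.cong)
    qed
    finally show ?thesis .
  qed
qed

lemma radial_mult_radial_mult:
  "radial_mult n G (radial_mult n K u) B x = (if finite B then (\<Sum>L\<in>pair_subsets n B.
      (\<Sum>J\<in>Pow L. complex_of_real (G (card J) (rsq x)) * complex_of_real (K (card (L - J)) (rsq x)))
        * u (B - gen_pairs L) x) else 0)"
proof (cases "finite B")
  case True
  let ?a = "\<lambda>J. complex_of_real (G (card J) (rsq x))"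
  let ?k = "\<lambda>J. complex_of_real (K (card J) (rsq x))"
  have "radial_mult n G (radial_mult n K u) B x
      = (\<Sum>J\<in>pair_subsets n B. \<Sum>K'\<in>pair_subsets n (B - gen_pairs J). ?a J
          * (?k K' * u (B - gen_pairs J - gen_pairs K') x))"
    unfolding radial_mult_def using True by (simp add: sum_distrib_left)
  also have "\<dots> = (\<Sum>(J,K')\<in>Sigma (pair_subsets n B) (\<lambda>J. pair_subsets n (B - gen_pairs J)). ?a J
      * (?k K' * u (B - gen_pairs J - gen_pairs K') x))"
    by (rule sum.Sigma) auto
  also have "\<dots> = (\<Sum>(L,J)\<in>Sigma (pair_subsets n B) Pow. ?a J * ?k (L - J) * u (B - gen_pairs L) x)"
  proof (rule sum.reindex_bij_witness[where i="\<lambda>(L,J). (J, L - J)" and j="\<lambda>(J,K'). (J \<union> K', J)"])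
    fix a assume a: "a \<in> Sigma (pair_subsets n B) (\<lambda>J. pair_subsets n (B - gen_pairs J))"
    obtain J K' where [simp]: "a = (J, K')" by (cases a)
    have J: "J \<subseteq> {1..n}" "gen_pairs J \<subseteq> B" and K: "K' \<subseteq> {1..n}" "gen_pairs K' \<subseteq> B - gen_pairs J"
        using a by (auto simp: pair_subsets_def)
    have "gen_pairs J \<inter> gen_pairs K' = {}" "0 \<notin> J" "0 \<notin> K'" using J K by auto
    then have dj: "J \<inter> K' = {}" using gen_pairs_disjoint_iff[of J K'] by simp
    have e1: "(J \<union> K') - J = K'" using dj by blast
    have e2: "B - gen_pairs (J \<union> K') = B - gen_pairs J - gen_pairs K'" by (auto simp: gen_pairs_Un)
    show "(case case a of (J, K') \<Rightarrow> (J \<union> K', J) of (L, J) \<Rightarrow> (J, L - J)) = a" using dj by auto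
    show "(case a of (J, K') \<Rightarrow> (J \<union> K', J)) \<in> Sigma (pair_subsets n B) Pow"
      using J K by (auto simp: pair_subsets_def gen_pairs_Un)
    show "(case case a of (J, K') \<Rightarrow> (J \<union> K', J) of (L, J) \<Rightarrow> ?a J * ?k (L - J)
        * u (B - gen_pairs L) x) =
          (case a of (J, K') \<Rightarrow> ?a J * (?k K' * u (B - gen_pairs J - gen_pairs K') x))"
      using e1 e2 by (simp add: mult.assoc)
  next
    fix b assume b: "b \<in> Sigma (pair_subsets n B) Pow"
    obtain L J where [simp]: "b = (L, J)" by (cases b)
    have L: "L \<subseteq> {1..n}" "gen_pairs L \<subseteq> B" "J \<subseteq> L" using b by (auto simp: pair_subsets_def)
    have pL: "0 \<notin> L" "0 \<notin> J" using L by auto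
    show "(case case b of (L, J) \<Rightarrow> (J, L - J) of (J, K') \<Rightarrow> (J \<union> K', J)) = b" using L by auto
    have "gen_pairs J \<subseteq> gen_pairs L" using gen_pairs_subset_iff[OF pL(2) pL(1)] L by simp
    moreover have "gen_pairs (L - J) = gen_pairs L - gen_pairs J" using gen_pairs_Diff[OF pL] .
    ultimately show "(case b of (L, J) \<Rightarrow> (J, L - J)) \<in> Sigma (pair_subsets n B)
        (\<lambda>J. pair_subsets n (B - gen_pairs J))"
      using L by (auto simp: pair_subsets_def)
  qed
  also have "\<dots> = (\<Sum>L\<in>pair_subsets n B. \<Sum>J\<in>Pow L. ?a J * ?k (L - J) * u (B - gen_pairs L) x)"
    by (rule sum.Sigma[symmetric]) (auto simp: pair_subsets_def intro: finite_subset)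
  finally show ?thesis using True by (simp add: sum_distrib_right)
qed (simp add: radial_mult_def)

lemma sum_Pow_complement:
  assumes "finite L"
  shows "(\<Sum>J\<in>Pow L. f J (L - J)) = (\<Sum>J\<in>Pow L. f (L - J) J)"
  by (rule sum.reindex_bij_witness[where i="\<lambda>J. L - J" and j="\<lambda>J. L - J"])
      (auto simp: Diff_Diff_Int Int_absorb1)

lemma radial_mult_commute: "radial_mult n G (radial_mult n K u)
    = radial_mult n K (radial_mult n G u)"
proof (intro ext)
  fix B x
  show "radial_mult n G (radial_mult n K u) B x = radial_mult n K (radial_mult n G u) B x"
    unfolding radial_mult_radial_mult
    by (auto intro!: sum.cong simp: pair_subsets_def mult.commute finite_subset
        sum_Pow_complement[where f="\<lambda>J J'. complex_of_real (G (card J) (rsq x))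
            * complex_of_real (K (card J') (rsq x))"])
qed

definition xgsq_coeffs :: "nat \<Rightarrow> real \<Rightarrow> real" where
  "xgsq_coeffs l t = (if l = 1 then 1 else 0)"

lemma sum_Pow_xgsq_coeffs:
  assumes "finite L"
  shows "(\<Sum>J\<in>Pow L. complex_of_real (xgsq_coeffs (card J) t) * complex_of_real (K (card (L - J)) t))
    = complex_of_real (real (card L) * K (card L - 1) t)"
proof -
  have "(\<Sum>J\<in>Pow L. complex_of_real (xgsq_coeffs (card J) t) * complex_of_real (K (card (L - J)) t))
      = (\<Sum>J\<in>Pow L. if card J = 1 then complex_of_real (K (card L - 1) t) else 0)"
    using assms by (intro sum.cong refl) (auto simp: xgsq_coeffs_def card_Diff_subset finite_subset)
  also have "\<dots> = (\<Sum>J\<in>{J\<in>Pow L. card J = 1}. complex_of_real (K (card L - 1) t))"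
    using assms by (simp add: sum.If_cases Int_def)
  also have "\<dots> = of_nat (card {J. J \<subseteq> L \<and> card J = 1}) * complex_of_real (K (card L - 1) t)"
    by (simp add: Pow_def)
  also have "card {J. J \<subseteq> L \<and> card J = 1} = card L" using n_subsets[OF assms, of 1] by simp
  finally show ?thesis by simp
qed

definition xgsq_mult_coeffs :: "(nat \<Rightarrow> real \<Rightarrow> real) \<Rightarrow> nat \<Rightarrow> real \<Rightarrow> real" where
  "xgsq_mult_coeffs K l t = real l * K (l - 1) t"

lemma radial_mult_xgsq_left: "radial_mult n xgsq_coeffs (radial_mult n K u)
    = radial_mult n (xgsq_mult_coeffs K) u"
proof (intro ext)
  fix B x
  show "radial_mult n xgsq_coeffs (radial_mult n K u) B x
      = radial_mult n (xgsq_mult_coeffs K) u B x"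
    unfolding radial_mult_radial_mult
    by (auto simp: radial_mult_def pair_subsets_def sum_Pow_xgsq_coeffs xgsq_mult_coeffs_def
        finite_subset
        intro!: sum.cong)
qed

lemma radial_mult_xgsq_right: "radial_mult n K (radial_mult n xgsq_coeffs u)
    = radial_mult n (xgsq_mult_coeffs K) u"
  using radial_mult_commute radial_mult_xgsq_left by metis

lemma radial_mult_one_gen_pairs:
  assumes "J0 \<subseteq> {1..n}"
  shows "radial_mult n G sf_one (gen_pairs J0) x = complex_of_real (G (card J0) (rsq x))"
proof -
  have f: "finite J0" using assms finite_subset by blast
  have e0: "radial_mult n G sf_one (gen_pairs J0) x
      = (\<Sum>J\<in>pair_subsets n (gen_pairs J0). complex_of_real (G (card J) (rsq x))
          * (if gen_pairs J0 - gen_pairs J = {} then 1 else 0))"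
    by (simp add: radial_mult_def sf_one_def f)
  have "radial_mult n G sf_one (gen_pairs J0) x
      = (\<Sum>J\<in>pair_subsets n (gen_pairs J0). if J
          = J0 then complex_of_real (G (card J) (rsq x)) else 0)"
    unfolding e0
  proof (intro sum.cong refl)
    fix J assume "J \<in> pair_subsets n (gen_pairs J0)"
    then have J: "J \<subseteq> {1..n}" "gen_pairs J \<subseteq> gen_pairs J0" by (auto simp: pair_subsets_def)
    have p: "0 \<notin> J" "0 \<notin> J0" using J assms by auto
    have "J \<subseteq> J0" using J gen_pairs_subset_iff[OF p] by simp
    moreover have "gen_pairs J0 - gen_pairs J = {}
        \<longleftrightarrow> J0 \<subseteq> J" using gen_pairs_subset_iff[OF p(2) p(1)] by auto
    ultimately show "complex_of_real (G (card J) (rsq x))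
        * (if gen_pairs J0 - gen_pairs J = {} then 1 else 0) =
         (if J = J0 then complex_of_real (G (card J) (rsq x)) else 0)" by auto
  qed
  also have "\<dots> = complex_of_real (G (card J0) (rsq x))" using assms by (simp add: pair_subsets_def)
  finally show ?thesis .
qed

lemma radial_mult_one_eq_0:
  assumes "\<forall>J. J \<subseteq> {1..n} \<longrightarrow> A \<noteq> gen_pairs J"
  shows "radial_mult n G sf_one A x = 0"
  unfolding radial_mult_def sf_one_def using assms
      by (auto intro!: sum.neutral simp: pair_subsets_def)

lemma radial_mult_one_eqI:
  assumes "\<And>J x. J \<subseteq> {1..n} \<Longrightarrow> v (gen_pairs J) x = complex_of_real (G (card J) (rsq x))"
    and "\<And>A x. \<forall>J. J \<subseteq> {1..n} \<longrightarrow> A \<noteq> gen_pairs J \<Longrightarrow> v A x = 0"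
  shows "v = radial_mult n G sf_one"
proof (intro ext)
  fix A x
  show "v A x = radial_mult n G sf_one A x"
  proof (cases "\<exists>J. J \<subseteq> {1..n} \<and> A = gen_pairs J")
    case True
    then obtain J where "J \<subseteq> {1..n}" "A = gen_pairs J" by blast
    then show ?thesis using assms(1)[of J x] radial_mult_one_gen_pairs[of J n G x] by simp
  next
    case False
    then show ?thesis using assms(2) radial_mult_one_eq_0 by auto
  qed
qed

lemma xg_pair_one: "j \<ge> 1 \<Longrightarrow> xg (2*j - 1) (xg (2*j) sf_one) A x = (if A = gen_pair j then 1 else 0)"
proof (cases "A = gen_pair j")
  case True
  assume j: "j \<ge> 1"
  have a: "A - {2*j - 1} = {2*j}" "{b \<in> A. b < 2*j - 1} = {}" "{b\<in>{2*j}. b < 2*j} = {}"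
    using True j by (auto simp: gen_pair_def)
  have b: "{a. (a = 2*j - Suc 0 \<or> a = 2*j) \<and> a < 2*j - Suc 0} = {}" "{a. a = 2*j \<and> a < 2*j}
      = {}" by auto
  show ?thesis using True j a by (simp add: xg_def sf_one_def gen_pair_def b)
next
  case False
  assume j: "j \<ge> 1"
  have "\<not> (2*j - 1 \<in> A \<and> 2*j \<in> A - {2*j - 1} \<and> A - {2*j - 1} - {2*j} = {})"
  proof
    assume h: "2*j - 1 \<in> A \<and> 2*j \<in> A - {2*j - 1} \<and> A - {2*j - 1} - {2*j} = {}"
    then have "A = gen_pair j" by (auto simp: gen_pair_def)
    then show False using False by simp
  qed
  then show ?thesis using False by (auto simp: xg_def sf_one_def)
qed

lemma xgsq_eq_radial_mult: "xgsq n = (radial_mult n xgsq_coeffs sf_one :: 'm::finite sfun)"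
proof (rule radial_mult_one_eqI)
  fix J and x :: "real^'m" assume J: "J \<subseteq> {1..n}"
  have e: "\<And>j. j \<in> {1..n} \<Longrightarrow> (gen_pairs J = gen_pair j) = (J = {j})"
  proof -
    have "0 \<notin> J" using J by auto
    then show "\<And>j. j \<in> {1..n} \<Longrightarrow> (gen_pairs J = gen_pair j) = (J = {j})"
      using gen_pairs_eq_iff[of J "{j}" for j] by (auto simp: gen_pairs_singleton)
  qed
  have "xgsq n (gen_pairs J) x = (\<Sum>j\<in>{1..n}. if J = {j} then 1 else 0)"
    unfolding xgsq_def sf_sum_def
  proof (intro sum.cong refl)
    fix j assume j: "j \<in> {1..n}"
    have "xg (2*j - 1) (xg (2*j) sf_one) (gen_pairs J) x
        = (if gen_pairs J = gen_pair j then 1 else 0)"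
      by (rule xg_pair_one) (use j in simp)
    then show "xg (2*j - 1) (xg (2*j) sf_one) (gen_pairs J) x = (if J = {j} then 1 else 0)"
      using e[OF j] by simp
  qed
  also have "\<dots> = complex_of_real (xgsq_coeffs (card J) (rsq x))"
  proof (cases "card J = 1")
    case True
    then obtain j0 where j0: "J = {j0}" using card_1_singletonE by blast
    then have "j0 \<in> {1..n}" using J by auto
    then show ?thesis using j0 by (simp add: xgsq_coeffs_def)
  next
    case False
    then have "\<And>j. J \<noteq> {j}" by auto
    then show ?thesis using False by (simp add: xgsq_coeffs_def)
  qed
  finally show "xgsq n (gen_pairs J) x = complex_of_real (xgsq_coeffs (card J) (rsq x))" .
next
  fix A and x :: "real^'m" assume A: "\<forall>J. J \<subseteq> {1..n} \<longrightarrow> A \<noteq> gen_pairs J"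
  have "\<And>j. j \<in> {1..n}
      \<Longrightarrow> A \<noteq> gen_pair j" using A gen_pairs_singleton by (metis empty_subsetI insert_subset)
  then show "xgsq n A x = 0" unfolding xgsq_def sf_sum_def
  proof (intro sum.neutral ballI)
    fix j assume j: "j \<in> {1..n}" "\<And>j. j \<in> {1..n} \<Longrightarrow> A \<noteq> gen_pair j"
    have "xg (2*j - 1) (xg (2*j) sf_one) A x = (if A = gen_pair j then 1 else 0)"
      by (rule xg_pair_one) (use j in simp)
    then show "xg (2*j - 1) (xg (2*j) sf_one) A x = 0" using j by simp
  qed
qed

lemma sf_mult_xgsq: "sf_mult (xgsq n) u = radial_mult n xgsq_coeffs u"
  by (simp add: xgsq_eq_radial_mult sf_mult_radial_mult_one)

lemma sf_one_eq_radial_mult: "sf_one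
    = (radial_mult n (\<lambda>l t. if l = 0 then 1 else 0) sf_one :: 'm::finite sfun)"
proof (rule radial_mult_one_eqI)
  fix J and x :: "real^'m" assume J: "J \<subseteq> {1..n}"
  have f: "finite J" using J finite_subset by blast
  have "0 \<notin> J" using J by auto
  then have "gen_pairs J = {} \<longleftrightarrow> J = {}" using gen_pairs_eq_iff[of J "{}"] by auto
  then show "sf_one (gen_pairs J) x = complex_of_real (if card J = 0 then 1 else 0)"
    using f by (simp add: sf_one_def)
next
  fix A and x :: "real^'m" assume A: "\<forall>J. J \<subseteq> {1..n} \<longrightarrow> A \<noteq> gen_pairs J"
  then have "A \<noteq> {}" using gen_pairs_empty by (metis empty_subsetI)
  then show "sf_one A x = 0" by (simp add: sf_one_def)
qed

lemma sf_pow_xgsq: "sf_pow (xgsq n) k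
    = (radial_mult n (\<lambda>l t. if l = k then fact k else 0) sf_one :: 'm::finite sfun)"
proof (induction k)
  case 0
  have "sf_pow (xgsq n :: 'm sfun) 0 = sf_one" by simp
  also have "\<dots> = radial_mult n (\<lambda>l t. if l = 0 then 1 else 0) sf_one"
      by (rule sf_one_eq_radial_mult)
  also have "\<dots> = radial_mult n (\<lambda>l t. if l = 0 then fact 0 else 0) sf_one" by (simp only: fact_0)
  finally show ?case .
next
  case (Suc k)
  have "sf_pow (xgsq n :: 'm sfun) (Suc k) = sf_mult (xgsq n) (sf_pow (xgsq n) k)" by simp
  also have "\<dots> = radial_mult n xgsq_coeffs (sf_pow (xgsq n) k)" by (rule sf_mult_xgsq)
  also have "\<dots> = radial_mult n xgsq_coeffs
      (radial_mult n (\<lambda>l t. if l = k then fact k else 0) sf_one)"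
    by (simp only: Suc.IH)
  also have "\<dots> = radial_mult n (xgsq_mult_coeffs (\<lambda>l t. if l = k then fact k else 0)) sf_one"
    by (rule radial_mult_xgsq_left)
  also have "xgsq_mult_coeffs (\<lambda>l t. if l = k then fact k else 0)
      = (\<lambda>l t. if l = Suc k then fact (Suc k) else 0)"
    by (intro ext) (auto simp: xgsq_mult_coeffs_def split: nat_diff_split)
  finally show ?case .
qed

definition hR2_coeffs :: "(real \<Rightarrow> real) \<Rightarrow> nat \<Rightarrow> real \<Rightarrow> real" where
  "hR2_coeffs h l t = (-1) ^ l * (deriv ^^ l) h t"

lemma radial_mult_sf_scal: "radial_mult n G (sf_scal g) A x = g x * radial_mult n G sf_one A x"
  unfolding radial_mult_def sf_scal_def sf_one_def by (auto simp: sum_distrib_left intro!: sum.cong)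

lemma hR2_eq_radial_mult: "hR2 n h = (radial_mult n (hR2_coeffs h) sf_one :: 'm::finite sfun)"
proof -
  have e: "\<And>A x. hR2 n h A x = (\<Sum>j\<in>{0..n}. ((-1) ^ j / of_nat (fact j)) *
      (complex_of_real ((deriv ^^ j) h (rsq x))
          * radial_mult n (\<lambda>l t. if l = j then fact j else 0) sf_one A x))"
    unfolding hR2_def sf_sum_def sf_scale_def sf_pow_xgsq sf_mult_radial_mult_one
        radial_mult_sf_scal by simp
  show ?thesis
  proof (rule radial_mult_one_eqI)
    fix J and x :: "real^'m" assume J: "J \<subseteq> {1..n}"
    have c: "card J \<le> n" using card_mono[OF _ J] by simp
    have "hR2 n h (gen_pairs J) x = (\<Sum>j\<in>{0..n}. if j = card J then ((-1) ^ j / of_nat (fact j)) *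
      (complex_of_real ((deriv ^^ j) h (rsq x)) * of_real (fact j)) else 0)"
      unfolding e by (intro sum.cong refl) (auto simp: radial_mult_one_gen_pairs[OF J])
    also have "\<dots> = ((-1) ^ card J / of_nat (fact (card J))) *
      (complex_of_real ((deriv ^^ card J) h (rsq x)) * of_real (fact (card J)))"
      using c by simp
    also have "\<dots> = complex_of_real (hR2_coeffs h (card J) (rsq x))"
      by (simp add: hR2_coeffs_def)
    finally show "hR2 n h (gen_pairs J) x = complex_of_real (hR2_coeffs h (card J) (rsq x))" .
  next
    fix A and x :: "real^'m" assume A: "\<forall>J. J \<subseteq> {1..n} \<longrightarrow> A \<noteq> gen_pairs J"
    show "hR2 n h A x = 0" unfolding e by (simp add: radial_mult_one_eq_0[OF A])
  qed
qed

lemma sf_mult_hR2: "sf_mult (hR2 n h) u = radial_mult n (hR2_coeffs h) u"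
  by (simp add: hR2_eq_radial_mult sf_mult_radial_mult_one)

section \<open>The operators in components\<close>

definition free_pairs :: "nat \<Rightarrow> nat set \<Rightarrow> nat set" where
  "free_pairs n B = {j\<in>{1..n}. gen_pair j \<inter> B = {}}"

definition full_pairs :: "nat \<Rightarrow> nat set \<Rightarrow> nat set" where
  "full_pairs n B = {j\<in>{1..n}. gen_pair j \<subseteq> B}"

definition pair_contraction :: "nat \<Rightarrow> 'm::finite sfun \<Rightarrow> 'm sfun" where
  "pair_contraction n u = (\<lambda>B x. \<Sum>j\<in>free_pairs n B. u (B \<union> gen_pair j) x)"

definition fermi_degree :: "nat \<Rightarrow> 'm::finite sfun \<Rightarrow> 'm sfun" where
  "fermi_degree n u = (\<lambda>B x. of_nat (card (B \<inter> gens n)) * u B x)"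

definition fermi_codegree :: "nat \<Rightarrow> 'm::finite sfun \<Rightarrow> 'm sfun" where
  "fermi_codegree n u = (\<lambda>B x. (of_nat n - of_nat (card (B \<inter> gens n))) * u B x)"

definition bose_euler :: "'m::finite sfun \<Rightarrow> 'm sfun" where
  "bose_euler u = (\<lambda>B x. \<Sum>i\<in>UNIV. complex_of_real (x$i) * pd i (u B) x)"

definition bose_laplace :: "'m::finite sfun \<Rightarrow> 'm sfun" where
  "bose_laplace u = (\<lambda>B x. \<Sum>i\<in>UNIV. pd i (pd i (u B)) x)"

lemma dg_dg_pair:
  assumes "j \<ge> 1"
  shows "dg (2*j - 1) (dg (2*j) f) A x
      = (if gen_pair j \<inter> A = {} then - f (A \<union> gen_pair j) x else 0)"
proof (cases "gen_pair j \<inter> A = {}")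
  case True
  then have n: "2*j - 1 \<notin> A" "2*j \<notin> A" by (auto simp: gen_pair_def)
  let ?S = "{a\<in>A. a < 2*j - 1}"
  have "finite ?S" by (rule finite_subset[of _ "{..<2*j-1}"]) auto
  moreover have "{a\<in>insert (2*j-1) A. a < 2*j} = insert (2*j - 1) ?S" using n assms by auto
  ultimately have c: "card {a\<in>insert (2*j-1) A. a < 2*j} = Suc (card ?S)" by simp
  have u: "insert (2*j) (insert (2*j-1) A) = A \<union> gen_pair j" by (auto simp: gen_pair_def)
  have "dg (2*j - 1) (dg (2*j) f) A x
      = (-1) ^ card ?S * ((-1) ^ Suc (card ?S) * f (A \<union> gen_pair j) x)"
    using n c u assms by (simp add: dg_def)
  then show ?thesis using True by simp
next
  case False
  then have "2*j-1 \<in> A \<or> 2*j \<in> insert (2*j-1) A" by (auto simp: gen_pair_def)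
  then show ?thesis using False by (auto simp: dg_def)
qed

lemma xg_dg: "xg j (dg j f) B x = (if j \<in> B then f B x else 0)"
proof (cases "j \<in> B")
  case True
  then have "{a \<in> B. a \<noteq> j \<and> a < j} = {a\<in>B. a < j}" "insert j B = B" by auto
  with True show ?thesis by (simp add: xg_def dg_def mult.assoc[symmetric])
qed (simp add: xg_def)

lemma super_laplace_eq: "super_laplace n f
    = sf_add (bose_laplace f) (sf_scale 4 (pair_contraction n f))"
proof (intro ext)
  fix A x
  have "(\<Sum>j\<in>{1..n}. dg (2*j - 1) (dg (2*j) f) A x)
      = (\<Sum>j\<in>{1..n}. if gen_pair j \<inter> A = {} then - f (A \<union> gen_pair j) x else 0)"
    by (intro sum.cong refl dg_dg_pair) simp
  also have "\<dots> = - pair_contraction n f A x"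
    by (simp add: pair_contraction_def free_pairs_def sum.If_cases sum_negf Int_def)
  finally show "super_laplace n f A x
      = sf_add (bose_laplace f) (sf_scale 4 (pair_contraction n f)) A x"
    by (simp add: super_laplace_def sf_add_def sf_scale_def sf_sum_def sf_sumb_def db_def
        bose_laplace_def)
qed

lemma super_euler_eq: "super_euler n f = sf_add (bose_euler f) (fermi_degree n f)"
proof (intro ext)
  fix A x
  have "(\<Sum>j\<in>{1..2*n}. xg j (dg j f) A x) = (\<Sum>j\<in>{1..2*n}. if j \<in> A then f A x else 0)"
    by (intro sum.cong refl) (simp add: xg_dg)
  also have "\<dots> = of_nat (card (A \<inter> gens n)) * f A x"
    by (simp add: sum.If_cases gens_def Int_def conj_commute)
  finally show "super_euler n f A x = sf_add (bose_euler f) (fermi_degree n f) A x"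
    by (simp add: super_euler_def sf_add_def sf_sum_def sf_sumb_def db_def xb_def bose_euler_def
        fermi_degree_def)
qed

lemma laplace_beltrami_eq:
  fixes u :: "'m::finite sfun"
  shows "laplace_beltrami n u A x = complex_of_real (rsq x) * super_laplace n u A x
   - radial_mult n xgsq_coeffs (super_laplace n u) A x
   - super_euler n (sf_add (sf_scale (of_int (int CARD('m) - 2 * int n - 2)) u) (super_euler n u))
       A x"
  by (simp add: laplace_beltrami_def Let_def mulR2_def sf_add_def sf_scale_def sf_mult_xgsq
      algebra_simps)

section \<open>Commutators with radial superfunctions\<close>

lemma finite_free_pairs [simp]: "finite (free_pairs n B)"
  by (simp add: free_pairs_def)

lemma finite_full_pairs [simp]: "finite (full_pairs n B)"
  by (simp add: full_pairs_def)

lemma pair_subsets_full_pairs: "J \<in> pair_subsets n B \<Longrightarrow> J \<subseteq> full_pairs n B"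
  by (auto simp: pair_subsets_def full_pairs_def gen_pairs_def)

lemma card_Int_gen_pair:
  assumes "j \<ge> 1"
  shows "int (card (B \<inter> gen_pair j)) + of_bool (gen_pair j \<inter> B = {}) = 1 + of_bool (gen_pair j \<subseteq> B)"
proof -
  have "2*j - 1 \<noteq> 2*j" using assms by simp
  then show ?thesis
    by (cases "2*j - 1 \<in> B"; cases "2*j \<in> B") (auto simp: gen_pair_def Int_insert_right)
qed

lemma card_free_pairs:
  "int (card (free_pairs n B)) = int n - int (card (B \<inter> gens n)) + int (card (full_pairs n B))"
proof -
  have e: "B \<inter> gens n = (\<Union>j\<in>{1..n}. B \<inter> gen_pair j)"
    unfolding gens_eq_gen_pairs gen_pairs_def by auto
  have "\<forall>i\<in>{1..n}. \<forall>j\<in>{1..n}. i \<noteq> j \<longrightarrow> B \<inter> gen_pair i \<inter> (B \<inter> gen_pair j) = {}"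
    using mem_gen_pair_iff by auto
  then have "card (B \<inter> gens n) = (\<Sum>j\<in>{1..n}. card (B \<inter> gen_pair j))"
    unfolding e by (intro card_UN_disjoint) auto
  moreover have "int (card (free_pairs n B)) = (\<Sum>j\<in>{1..n}. of_bool (gen_pair j \<inter> B = {}))"
    by (simp add: free_pairs_def Int_def)
  moreover have "int (card (full_pairs n B)) = (\<Sum>j\<in>{1..n}. of_bool (gen_pair j \<subseteq> B))"
    by (simp add: full_pairs_def Int_def)
  moreover have "(\<Sum>j\<in>{1..n}. int (card (B \<inter> gen_pair j)) + of_bool (gen_pair j \<inter> B = {}))
      = (\<Sum>j\<in>{1..n}. 1 + of_bool (gen_pair j \<subseteq> B))"
    by (intro sum.cong refl card_Int_gen_pair) simp
  ultimately show ?thesis by (simp add: sum.distrib)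
qed

lemma fermi_degree_radial_mult: "fermi_degree n (radial_mult n G u)
    = sf_add (radial_mult n G (fermi_degree n u)) (radial_mult n (\<lambda>l t. 2 * real l * G l t) u)"
proof (intro ext)
  fix B x
  show "fermi_degree n (radial_mult n G u) B x
      = sf_add (radial_mult n G (fermi_degree n u)) (radial_mult n (\<lambda>l t. 2 * real l * G l t) u) B
          x"
  proof (cases "finite B")
    case True
    have "fermi_degree n (radial_mult n G u) B x
        = (\<Sum>J\<in>pair_subsets n B. of_nat (card (B \<inter> gens n))
            * (complex_of_real (G (card J) (rsq x)) * u (B - gen_pairs J) x))"
      unfolding fermi_degree_def radial_mult_def using True by (simp add: sum_distrib_left)
    also have "\<dots> = (\<Sum>J\<in>pair_subsets n B. complex_of_real (G (card J) (rsq x))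
        * (of_nat (card ((B - gen_pairs J) \<inter> gens n)) * u (B - gen_pairs J) x)
        + complex_of_real (2 * real (card J) * G (card J) (rsq x)) * u (B - gen_pairs J) x)"
    proof (intro sum.cong refl)
      fix J assume "J \<in> pair_subsets n B"
      from card_gens_Diff_gen_pairs[OF this] show "of_nat (card (B \<inter> gens n))
          * (complex_of_real (G (card J) (rsq x)) * u (B - gen_pairs J) x) =
         complex_of_real (G (card J) (rsq x))
             * (of_nat (card ((B - gen_pairs J) \<inter> gens n)) * u (B - gen_pairs J) x)
        + complex_of_real (2 * real (card J) * G (card J) (rsq x)) * u (B - gen_pairs J) x"
        by (simp add: algebra_simps)
    qed
    also have "\<dots> = sf_add (radial_mult n G (fermi_degree n u))
        (radial_mult n (\<lambda>l t. 2 * real l * G l t) u) B x"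
      unfolding sf_add_def radial_mult_def fermi_degree_def using True by (simp add: sum.distrib)
    finally show ?thesis .
  qed (simp add: fermi_degree_def radial_mult_def sf_add_def)
qed

lemma pair_subsets_Un_free_pair:
  assumes j: "j \<in> free_pairs n B"
  shows "pair_subsets n (B \<union> gen_pair j) = pair_subsets n B \<union> insert j ` pair_subsets n B"
    and "pair_subsets n B \<inter> insert j ` pair_subsets n B = {}"
    and "inj_on (insert j) (pair_subsets n B)"
    and "\<And>J. J \<in> pair_subsets n B \<Longrightarrow> j \<notin> J"
proof -
  have j1: "j \<ge> 1" "j \<le> n" "gen_pair j \<inter> B = {}" using j by (auto simp: free_pairs_def)
  have pj: "gen_pair j \<noteq> {}" by (simp add: gen_pair_def)
  show nj: "\<And>J. J \<in> pair_subsets n B \<Longrightarrow> j \<notin> J"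
  proof
    fix J assume J: "J \<in> pair_subsets n B" "j \<in> J"
    then have "gen_pair j \<subseteq> gen_pairs J" by (auto simp: gen_pairs_def)
    then show False using J j1 pj by (auto simp: pair_subsets_def)
  qed
  show "pair_subsets n B \<inter> insert j ` pair_subsets n B = {}" using nj by auto
  show "inj_on (insert j) (pair_subsets n B)" unfolding inj_on_def using nj
      by (metis Diff_insert_absorb)
  show "pair_subsets n (B \<union> gen_pair j) = pair_subsets n B \<union> insert j ` pair_subsets n B"
  proof
    show "pair_subsets n (B \<union> gen_pair j) \<subseteq> pair_subsets n B \<union> insert j ` pair_subsets n B"
    proof
      fix J assume J: "J \<in> pair_subsets n (B \<union> gen_pair j)"
      then have Js: "J \<subseteq> {1..n}" "gen_pairs J \<subseteq> B \<union> gen_pair j" by (auto simp: pair_subsets_def)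
      have pJ: "0 \<notin> J" using Js by auto
      show "J \<in> pair_subsets n B \<union> insert j ` pair_subsets n B"
      proof (cases "j \<in> J")
        case False
        then have "gen_pair j \<inter> gen_pairs J
            = {}" using gen_pair_disjoint_gen_pairs_iff[OF pJ j1(1)] by simp
        then have "J \<in> pair_subsets n B" using Js by (auto simp: pair_subsets_def)
        then show ?thesis by simp
      next
        case True
        have pJ': "0 \<notin> {j}" using j1 by simp
        have "gen_pairs (J - {j})
            = gen_pairs J - gen_pair j" using gen_pairs_Diff[OF pJ pJ']
                by (simp add: gen_pairs_singleton)
        then have "J - {j} \<in> pair_subsets n B" using Js by (auto simp: pair_subsets_def)
        moreover have "J = insert j (J - {j})" using True by auto
        ultimately show ?thesis by blast
      qed
    qed
  next
    show "pair_subsets n B \<union> insert j ` pair_subsets n B \<subseteq> pair_subsets n (B \<union> gen_pair j)"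
      using j1 by (auto simp: pair_subsets_def gen_pairs_insert)
  qed
qed

lemma radial_mult_Un_free_pair:
  assumes j: "j \<in> free_pairs n B" and fB: "finite B"
  shows "radial_mult n G u (B \<union> gen_pair j) x =
    (\<Sum>J\<in>pair_subsets n B. complex_of_real (G (card J) (rsq x))
        * u ((B - gen_pairs J) \<union> gen_pair j) x)
    + (\<Sum>K\<in>pair_subsets n B. complex_of_real (G (card K + 1) (rsq x)) * u (B - gen_pairs K) x)"
proof -
  note s = pair_subsets_Un_free_pair[OF j]
  have j1: "gen_pair j \<inter> B = {}" using j by (auto simp: free_pairs_def)
  have "radial_mult n G u (B \<union> gen_pair j) x = (\<Sum>J\<in>pair_subsets n B \<union> insert j ` pair_subsets n B.
       complex_of_real (G (card J) (rsq x)) * u (B \<union> gen_pair j - gen_pairs J) x)"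
    using fB by (simp add: radial_mult_def s(1))
  also have "\<dots> = (\<Sum>J\<in>pair_subsets n B. complex_of_real (G (card J) (rsq x))
      * u (B \<union> gen_pair j - gen_pairs J) x)
     + (\<Sum>J\<in>insert j ` pair_subsets n B. complex_of_real (G (card J) (rsq x))
         * u (B \<union> gen_pair j - gen_pairs J) x)"
    by (rule sum.union_disjoint) (auto simp: s(2))
  also have "(\<Sum>J\<in>insert j ` pair_subsets n B. complex_of_real (G (card J) (rsq x))
      * u (B \<union> gen_pair j - gen_pairs J) x)
     = (\<Sum>K\<in>pair_subsets n B. complex_of_real (G (card (insert j K)) (rsq x))
         * u (B \<union> gen_pair j - gen_pairs (insert j K)) x)"
    by (rule sum.reindex[OF s(3), unfolded comp_def])
  also have "\<dots> = (\<Sum>K\<in>pair_subsets n B. complex_of_real (G (card K + 1) (rsq x))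
      * u (B - gen_pairs K) x)"
  proof (intro sum.cong refl)
    fix K assume K: "K \<in> pair_subsets n B"
    have fK: "finite K" using K by (auto simp: pair_subsets_def intro: finite_subset)
    have "card (insert j K) = card K + 1" using fK s(4)[OF K] by simp
    moreover have "B \<union> gen_pair j - gen_pairs (insert j K)
        = B - gen_pairs K" using j1 by (auto simp: gen_pairs_insert)
    ultimately show "complex_of_real (G (card (insert j K)) (rsq x))
        * u (B \<union> gen_pair j - gen_pairs (insert j K)) x =
         complex_of_real (G (card K + 1) (rsq x)) * u (B - gen_pairs K) x" by simp
  qed
  also have "(\<Sum>J\<in>pair_subsets n B. complex_of_real (G (card J) (rsq x))
      * u (B \<union> gen_pair j - gen_pairs J) x)
      = (\<Sum>J\<in>pair_subsets n B. complex_of_real (G (card J) (rsq x))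
          * u ((B - gen_pairs J) \<union> gen_pair j) x)"
  proof (intro sum.cong refl)
    fix J assume "J \<in> pair_subsets n B"
    then have "gen_pairs J \<subseteq> B" by (auto simp: pair_subsets_def)
    then have "B \<union> gen_pair j - gen_pairs J = (B - gen_pairs J) \<union> gen_pair j" using j1 by auto
    then show "complex_of_real (G (card J) (rsq x)) * u (B \<union> gen_pair j - gen_pairs J) x =
         complex_of_real (G (card J) (rsq x)) * u ((B - gen_pairs J) \<union> gen_pair j) x" by simp
  qed
  finally show ?thesis .
qed

lemma free_pairs_Diff_gen_pairs:
  assumes J: "J \<in> pair_subsets n B"
  shows "free_pairs n (B - gen_pairs J) = free_pairs n B \<union> J" "free_pairs n B \<inter> J = {}"
proof -
  have Js: "J \<subseteq> {1..n}" "gen_pairs J \<subseteq> B" using J by (auto simp: pair_subsets_def)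
  have pJ: "0 \<notin> J" using Js by auto
  show "free_pairs n B \<inter> J = {}"
  proof (rule ccontr)
    assume "free_pairs n B \<inter> J \<noteq> {}"
    then obtain j where j: "j \<in> free_pairs n B" "j \<in> J" by auto
    then have "gen_pair j \<subseteq> gen_pairs J" "j \<ge> 1" using Js by (auto simp: gen_pairs_def)
    then show False using j Js by (auto simp: free_pairs_def gen_pair_def)
  qed
  show "free_pairs n (B - gen_pairs J) = free_pairs n B \<union> J"
  proof
    show "free_pairs n (B - gen_pairs J) \<subseteq> free_pairs n B \<union> J"
    proof
      fix j assume j: "j \<in> free_pairs n (B - gen_pairs J)"
      then have j1: "j \<ge> 1" "j \<le> n" "gen_pair j \<inter> (B - gen_pairs J)
          = {}" by (auto simp: free_pairs_def)
      show "j \<in> free_pairs n B \<union> J"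
      proof (cases "j \<in> J")
        case False
        then have "gen_pair j \<inter> gen_pairs J
            = {}" using gen_pair_disjoint_gen_pairs_iff[OF pJ j1(1)] by simp
        then show ?thesis using j1 by (auto simp: free_pairs_def)
      qed simp
    qed
  next
    show "free_pairs n B \<union> J \<subseteq> free_pairs n (B - gen_pairs J)"
      using Js by (auto simp: free_pairs_def gen_pairs_def)
  qed
qed

lemma sum_pair_subsets_remove_pair:
  fixes g :: "nat \<Rightarrow> complex" and u :: "'m::finite sfun"
  shows "(\<Sum>J\<in>pair_subsets n B. g (card J) * (\<Sum>j\<in>J. u ((B - gen_pairs J) \<union> gen_pair j) x))
    = (\<Sum>K\<in>pair_subsets n B. g (card K + 1) * of_nat (card (full_pairs n B) - card K)
        * u (B - gen_pairs K) x)"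
proof -
  have fs: "\<And>J. J \<in> pair_subsets n B
      \<Longrightarrow> finite J" by (auto simp: pair_subsets_def intro: finite_subset)
  have "(\<Sum>J\<in>pair_subsets n B. g (card J) * (\<Sum>j\<in>J. u ((B - gen_pairs J) \<union> gen_pair j) x))
     = (\<Sum>J\<in>pair_subsets n B. \<Sum>j\<in>J. g (card J) * u ((B - gen_pairs J) \<union> gen_pair j) x)"
    by (simp add: sum_distrib_left)
  also have "\<dots> = (\<Sum>(J,j)\<in>Sigma (pair_subsets n B) (\<lambda>J. J). g (card J)
      * u ((B - gen_pairs J) \<union> gen_pair j) x)"
    by (rule sum.Sigma) (auto simp: fs)
  also have "\<dots> = (\<Sum>(K,j)\<in>Sigma (pair_subsets n B) (\<lambda>K. full_pairs n B - K). g (card K + 1)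
      * u (B - gen_pairs K) x)"
  proof (rule sum.reindex_bij_witness[where i="\<lambda>(K,j). (insert j K, j)"
      and j="\<lambda>(J,j). (J - {j}, j)"])
    fix a assume a: "a \<in> Sigma (pair_subsets n B) (\<lambda>J. J)"
    obtain J j where [simp]: "a = (J, j)" by (cases a)
    have Jj: "J \<in> pair_subsets n B" "j \<in> J" using a by auto
    have Js: "J \<subseteq> {1..n}" "gen_pairs J \<subseteq> B" using Jj by (auto simp: pair_subsets_def)
    show "(case case a of (J, j) \<Rightarrow> (J - {j}, j) of (K, j) \<Rightarrow> (insert j K, j)) = a" using Jj by auto
    show "(case a of (J, j) \<Rightarrow> (J - {j}, j)) \<in> Sigma (pair_subsets n B) (\<lambda>K. full_pairs n B - K)"
      using Jj pair_subsets_full_pairs[OF Jj(1)] Js by (auto simp: pair_subsets_def gen_pairs_def)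
    have pj: "0 \<notin> J" "0 \<notin> {j}" using Js Jj by auto
    have e1: "card (J - {j}) + 1
        = card J" using fs[OF Jj(1)] Jj(2) card_gt_0_iff[of J] by (auto simp: card_Suc_Diff1)
    have "gen_pair j \<subseteq> gen_pairs J" using Jj by (auto simp: gen_pairs_def)
    then have e2: "B - gen_pairs (J - {j}) = (B - gen_pairs J) \<union> gen_pair j"
      using gen_pairs_Diff[OF pj] Js by (auto simp: gen_pairs_singleton)
    show "(case case a of (J, j) \<Rightarrow> (J - {j}, j) of (K, j) \<Rightarrow> g (card K + 1)
        * u (B - gen_pairs K) x) =
          (case a of (J, j) \<Rightarrow> g (card J) * u ((B - gen_pairs J) \<union> gen_pair j) x)"
      using e1 e2 by simp
  next
    fix b assume b: "b \<in> Sigma (pair_subsets n B) (\<lambda>K. full_pairs n B - K)"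
    obtain K j where [simp]: "b = (K, j)" by (cases b)
    have Kj: "K \<in> pair_subsets n B" "j \<in> full_pairs n B" "j \<notin> K" using b by auto
    show "(case case b of (K, j) \<Rightarrow> (insert j K, j) of (J, j) \<Rightarrow> (J - {j}, j)) = b" using Kj by auto
    show "(case b of (K, j) \<Rightarrow> (insert j K, j)) \<in> Sigma (pair_subsets n B) (\<lambda>J. J)"
      using Kj by (auto simp: pair_subsets_def full_pairs_def gen_pairs_insert)
  qed
  also have "\<dots> = (\<Sum>K\<in>pair_subsets n B. \<Sum>j\<in>full_pairs n B
      - K. g (card K + 1) * u (B - gen_pairs K) x)"
    by (rule sum.Sigma[symmetric]) auto
  also have "\<dots> = (\<Sum>K\<in>pair_subsets n B. g (card K + 1) * of_nat (card (full_pairs n B) - card K)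
      * u (B - gen_pairs K) x)"
  proof (intro sum.cong refl)
    fix K assume K: "K \<in> pair_subsets n B"
    have "card (full_pairs n B - K) = card (full_pairs n B) - card K"
      using pair_subsets_full_pairs[OF K] fs[OF K] by (simp add: card_Diff_subset)
    then show "(\<Sum>j\<in>full_pairs n B - K. g (card K + 1) * u (B - gen_pairs K) x) =
          g (card K + 1) * of_nat (card (full_pairs n B) - card K) * u (B - gen_pairs K) x"
              by (simp add: algebra_simps)
  qed
  finally show ?thesis .
qed

lemma pair_contraction_radial_mult_expand:
  assumes "finite B"
  shows "pair_contraction n (radial_mult n G u) B x =
    (\<Sum>j\<in>free_pairs n B. \<Sum>J\<in>pair_subsets n B.
        complex_of_real (G (card J) (rsq x)) * u ((B - gen_pairs J) \<union> gen_pair j) x)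
    + of_nat (card (free_pairs n B)) *
      (\<Sum>K\<in>pair_subsets n B. complex_of_real (G (card K + 1) (rsq x)) * u (B - gen_pairs K) x)"
proof -
  have "pair_contraction n (radial_mult n G u) B x =
    (\<Sum>j\<in>free_pairs n B. (\<Sum>J\<in>pair_subsets n B.
        complex_of_real (G (card J) (rsq x)) * u ((B - gen_pairs J) \<union> gen_pair j) x)
      + (\<Sum>K\<in>pair_subsets n B. complex_of_real (G (card K + 1) (rsq x)) * u (B - gen_pairs K) x))"
    unfolding pair_contraction_def by (intro sum.cong refl radial_mult_Un_free_pair assms)
  then show ?thesis by (simp add: sum.distrib)
qed

lemma radial_mult_pair_contraction_expand:
  assumes "finite B"
  shows "radial_mult n G (pair_contraction n u) B x =
    (\<Sum>j\<in>free_pairs n B. \<Sum>J\<in>pair_subsets n B.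
        complex_of_real (G (card J) (rsq x)) * u ((B - gen_pairs J) \<union> gen_pair j) x)
    + (\<Sum>K\<in>pair_subsets n B. complex_of_real (G (card K + 1) (rsq x))
        * of_nat (card (full_pairs n B) - card K) * u (B - gen_pairs K) x)"
proof -
  let ?g = "\<lambda>J. complex_of_real (G (card J) (rsq x))"
  let ?v = "\<lambda>J j. u ((B - gen_pairs J) \<union> gen_pair j) x"
  have "radial_mult n G (pair_contraction n u) B x
      = (\<Sum>J\<in>pair_subsets n B. ?g J * (\<Sum>j\<in>free_pairs n (B - gen_pairs J). ?v J j))"
    using assms by (simp add: radial_mult_def pair_contraction_def)
  also have "\<dots> = (\<Sum>J\<in>pair_subsets n B. ?g J * ((\<Sum>j\<in>free_pairs n B. ?v J j) + (\<Sum>j\<in>J. ?v J j)))"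
  proof (intro sum.cong refl arg_cong2[where f="(*)"])
    fix J assume J: "J \<in> pair_subsets n B"
    show "(\<Sum>j\<in>free_pairs n (B - gen_pairs J). ?v J j)
        = (\<Sum>j\<in>free_pairs n B. ?v J j) + (\<Sum>j\<in>J. ?v J j)"
      unfolding free_pairs_Diff_gen_pairs(1)[OF J]
          using free_pairs_Diff_gen_pairs(2)[OF J] pair_subsetsD(3)[OF J]
      by (intro sum.union_disjoint) auto
  qed
  also have "\<dots> = (\<Sum>j\<in>free_pairs n B. \<Sum>J\<in>pair_subsets n B. ?g J * ?v J j)
      + (\<Sum>J\<in>pair_subsets n B. ?g J * (\<Sum>j\<in>J. ?v J j))"
    by (simp add: distrib_left sum.distrib sum_distrib_left sum.swap[of _ "free_pairs n B"])
  finally show ?thesis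
    using sum_pair_subsets_remove_pair[where g="\<lambda>l. complex_of_real (G l (rsq x))" and n=n and u=u
        and x=x]
    by simp
qed

lemma pair_contraction_radial_mult:
  "pair_contraction n (radial_mult n G u) B x = radial_mult n G (pair_contraction n u) B x
    + radial_mult n (\<lambda>l t. G (l+1) t) (fermi_codegree n u) B x
        - radial_mult n (\<lambda>l t. real l * G (l+1) t) u B x"
proof (cases "finite B")
  case True
  let ?g1 = "\<lambda>K. complex_of_real (G (card K + 1) (rsq x))"
  let ?w = "\<lambda>K. u (B - gen_pairs K) x"
  have "of_nat (card (free_pairs n B)) * (?g1 K * ?w K)
      - ?g1 K * of_nat (card (full_pairs n B) - card K) * ?w K
      = ?g1 K * ((of_nat n - of_nat (card ((B - gen_pairs K) \<inter> gens n))) * ?w K)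
        - complex_of_real (real (card K) * G (card K + 1) (rsq x)) * ?w K"
    if K: "K \<in> pair_subsets n B" for K
  proof -
    have "card K \<le> card (full_pairs n B)" using card_mono[OF _ pair_subsets_full_pairs[OF K]]
        by simp
    then have full: "(of_nat (card (full_pairs n B) - card K) :: complex)
        = of_nat (card (full_pairs n B)) - of_nat (card K)"
      by (simp add: of_nat_diff)
    have gens: "(of_nat (card ((B - gen_pairs K) \<inter> gens n)) :: complex)
        = of_nat (card (B \<inter> gens n)) - 2 * of_nat (card K)"
      using card_gens_Diff_gen_pairs[OF K] by simp
    have free: "(of_nat (card (free_pairs n B)) :: complex)
        = of_nat n - of_nat (card (B \<inter> gens n)) + of_nat (card (full_pairs n B))"
      using arg_cong[OF card_free_pairs[of n B], of "of_int :: int \<Rightarrow> complex"] by simp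
    show ?thesis unfolding full gens free by (simp add: algebra_simps)
  qed
  then have "of_nat (card (free_pairs n B)) * (\<Sum>K\<in>pair_subsets n B. ?g1 K * ?w K)
      - (\<Sum>K\<in>pair_subsets n B. ?g1 K * of_nat (card (full_pairs n B) - card K) * ?w K)
      = radial_mult n (\<lambda>l t. G (l+1) t) (fermi_codegree n u) B x
          - radial_mult n (\<lambda>l t. real l * G (l+1) t) u B x"
    unfolding radial_mult_def fermi_codegree_def if_P[OF True] sum_distrib_left
        sum_subtractf[symmetric]
    by (intro sum.cong refl) auto
  then show ?thesis
    using pair_contraction_radial_mult_expand[OF True, of n G u x]
      radial_mult_pair_contraction_expand[OF True, of n G u x]
    by (simp add: algebra_simps)
qed (simp add: pair_contraction_def radial_mult_def)

lemma differentiable_radial_mult: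
  assumes G: "\<forall>l\<le>n. (G l has_real_derivative G1 l (rsq x)) (at (rsq x))"
    and u: "\<forall>B'. u B' differentiable (at x)"
  shows "radial_mult n G u B differentiable (at x)"
proof (cases "finite B")
  case True
  show ?thesis unfolding radial_mult_finite_eq[OF True]
  proof (intro differentiable_sum ballI differentiable_mult)
    fix J assume J: "J \<in> pair_subsets n B"
    show "(\<lambda>y. complex_of_real (G (card J) (rsq y))) differentiable (at x)"
      using G pair_subsetsD(5)[OF J] differentiable_radial by blast
    show "u (B - gen_pairs J) differentiable (at x)" using u by simp
  qed simp
qed (simp add: radial_mult_infinite_eq)

lemma pd_radial_mult:
  assumes G: "\<forall>l\<le>n. (G l has_real_derivative G1 l (rsq x)) (at (rsq x))"
    and u: "\<forall>B'. u B' differentiable (at x)"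
  shows "pd i (radial_mult n G u B) x
      = radial_mult n G (db i u) B x + complex_of_real (2 * x$i) * radial_mult n G1 u B x"
proof (cases "finite B")
  case True
  have "pd i (radial_mult n G u B) x
      = (\<Sum>J\<in>pair_subsets n B. pd i
          (\<lambda>y. complex_of_real (G (card J) (rsq y)) * u (B - gen_pairs J) y) x)"
    unfolding radial_mult_finite_eq[OF True]
  proof (intro pd_sum differentiable_mult)
    fix J assume J: "J \<in> pair_subsets n B"
    show "(\<lambda>y. complex_of_real (G (card J) (rsq y))) differentiable (at x)"
      using G pair_subsetsD(5)[OF J] differentiable_radial by blast
    show "u (B - gen_pairs J) differentiable (at x)" using u by simp
  qed simp
  also have "\<dots> = (\<Sum>J\<in>pair_subsets n B. complex_of_real (2 * x$i * G1 (card J) (rsq x))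
      * u (B - gen_pairs J) x
       + complex_of_real (G (card J) (rsq x)) * pd i (u (B - gen_pairs J)) x)"
  proof (intro sum.cong refl)
    fix J assume J: "J \<in> pair_subsets n B"
    have d: "(G (card J) has_real_derivative G1 (card J) (rsq x)) (at (rsq x))"
        using G pair_subsetsD(5)[OF J] by simp
    show "pd i (\<lambda>y. complex_of_real (G (card J) (rsq y)) * u (B - gen_pairs J) y) x =
      complex_of_real (2 * x$i * G1 (card J) (rsq x)) * u (B - gen_pairs J) x
       + complex_of_real (G (card J) (rsq x)) * pd i (u (B - gen_pairs J)) x"
      using pd_mult[OF differentiable_radial[OF d], of "u (B - gen_pairs J)" i] u pd_radial[OF d]
          by simp
  qed
  also have "\<dots> = radial_mult n G (db i u) B x + complex_of_real (2 * x$i) * radial_mult n G1 u B x"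
    using True by (simp add: radial_mult_def db_def sum.distrib sum_distrib_left algebra_simps)
  finally show ?thesis .
qed (simp add: radial_mult_infinite_eq pd_const radial_mult_def)

lemma bose_euler_radial_mult:
  assumes G: "\<forall>l\<le>n. (G l has_real_derivative G1 l (rsq x)) (at (rsq x))"
    and u: "\<forall>B'. u B' differentiable (at x)"
  shows "bose_euler (radial_mult n G u) B x
      = radial_mult n G (bose_euler u) B x + radial_mult n (\<lambda>l t. 2 * t * G1 l t) u B x"
proof -
  have "bose_euler (radial_mult n G u) B x
      = (\<Sum>i\<in>UNIV. complex_of_real (x$i) * radial_mult n G (db i u) B x)
      + (\<Sum>i\<in>UNIV. complex_of_real (2 * (x$i)^2) * radial_mult n G1 u B x)"
    unfolding bose_euler_def pd_radial_mult[of n G G1 x u, OF G u]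
        by (simp add: sum.distrib algebra_simps power2_eq_square)
  also have "(\<Sum>i\<in>UNIV. complex_of_real (x$i) * radial_mult n G (db i u) B x)
      = radial_mult n G (bose_euler u) B x"
    unfolding bose_euler_def db_def by (rule radial_mult_sum[symmetric])
  also have "(\<Sum>i\<in>UNIV. complex_of_real (2 * (x$i)^2) * radial_mult n G1 u B x)
      = complex_of_real (2 * rsq x) * radial_mult n G1 u B x"
    by (simp add: rsq_def sum_distrib_left sum_distrib_right)
  also have "\<dots> = radial_mult n (\<lambda>l t. 2 * t * G1 l t) u B x" by (rule radial_mult_rsq[symmetric])
  finally show ?thesis .
qed

lemma pd_pd_radial_mult:
  fixes u :: "'m::finite sfun"
  assumes O: "open \<Omega>" "x \<in> \<Omega>"
    and G: "\<forall>y\<in>\<Omega>. \<forall>l\<le>n. (G l has_real_derivative G1 l (rsq y)) (at (rsq y))"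
    and G1: "\<forall>l\<le>n. (G1 l has_real_derivative G2 l (rsq x)) (at (rsq x))"
    and u: "\<forall>y\<in>\<Omega>. \<forall>B'. u B' differentiable (at y)"
    and du: "\<forall>i B'. pd i (u B') differentiable (at x)"
  shows "pd i (pd i (radial_mult n G u B)) x = radial_mult n G (db i (db i u)) B x
      + complex_of_real (4 * x$i) * radial_mult n G1 (db i u) B x
      + 2 * radial_mult n G1 u B x + complex_of_real (4 * (x$i)^2) * radial_mult n G2 u B x"
proof -
  have Gx: "\<forall>l\<le>n. (G l has_real_derivative G1 l (rsq x)) (at (rsq x))" using G O by blast
  have ux: "\<forall>B'. u B' differentiable (at x)" using u O by blast
  have dux: "\<forall>B'. db i u B' differentiable (at x)" using du by (simp add: db_def)
  have "pd i (pd i (radial_mult n G u B)) x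
      = pd i (\<lambda>y. radial_mult n G (db i u) B y
          + complex_of_real (2 * y$i) * radial_mult n G1 u B y) x"
  proof (rule pd_cong_open[OF O])
    fix y assume "y \<in> \<Omega>"
    then show "pd i (radial_mult n G u B) y
        = radial_mult n G (db i u) B y + complex_of_real (2 * y$i) * radial_mult n G1 u B y"
      using G u by (intro pd_radial_mult) auto
  qed
  also have "\<dots> = pd i (radial_mult n G (db i u) B) x
      + pd i (\<lambda>y. complex_of_real (2 * y$i) * radial_mult n G1 u B y) x"
    using differentiable_radial_mult[of n G G1 x "db i u" B, OF Gx dux] differentiable_coord
      differentiable_radial_mult[of n G1 G2 x u B, OF G1 ux]
    by (intro pd_add differentiable_mult) auto
  also have "pd i (radial_mult n G (db i u) B) x
      = radial_mult n G (db i (db i u)) B x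
          + complex_of_real (2 * x$i) * radial_mult n G1 (db i u) B x"
    by (rule pd_radial_mult[of n G G1 x "db i u", OF Gx dux])
  also have "pd i (\<lambda>y. complex_of_real (2 * y$i) * radial_mult n G1 u B y) x
     = complex_of_real 2 * radial_mult n G1 u B x
         + complex_of_real (2 * x$i) * pd i (radial_mult n G1 u B) x"
    using pd_mult[OF differentiable_coord[of 2 i x] differentiable_radial_mult[of n G1 G2 x u B,
        OF G1 ux], of i]
      pd_coord[of i 2 x] by simp
  also have "pd i (radial_mult n G1 u B) x
      = radial_mult n G1 (db i u) B x + complex_of_real (2 * x$i) * radial_mult n G2 u B x"
    by (rule pd_radial_mult[of n G1 G2 x u, OF G1 ux])
  finally show ?thesis by (simp add: algebra_simps power2_eq_square)
qed

lemma bose_laplace_radial_mult: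
  fixes u :: "'m::finite sfun"
  assumes O: "open \<Omega>" "x \<in> \<Omega>"
    and G: "\<forall>y\<in>\<Omega>. \<forall>l\<le>n. (G l has_real_derivative G1 l (rsq y)) (at (rsq y))"
    and G1: "\<forall>l\<le>n. (G1 l has_real_derivative G2 l (rsq x)) (at (rsq x))"
    and u: "\<forall>y\<in>\<Omega>. \<forall>B'. u B' differentiable (at y)"
    and du: "\<forall>i B'. pd i (u B') differentiable (at x)"
  shows "bose_laplace (radial_mult n G u) B x
      = radial_mult n G (bose_laplace u) B x + 4 * radial_mult n G1 (bose_euler u) B x
     + of_nat (2 * CARD('m)) * radial_mult n G1 u B x + radial_mult n (\<lambda>l t. 4 * t * G2 l t) u B x"
proof -
  have step: "pd i (pd i (radial_mult n G u B)) x = radial_mult n G (db i (db i u)) B x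
      + complex_of_real (4 * x$i) * radial_mult n G1 (db i u) B x
      + 2 * radial_mult n G1 u B x + complex_of_real (4 * (x$i)^2) * radial_mult n G2 u B x" for i
    by (rule pd_pd_radial_mult[of \<Omega> x n G G1 G2 u i B, OF assms])
  have "bose_laplace (radial_mult n G u) B x
      = (\<Sum>i\<in>UNIV. radial_mult n G (db i (db i u)) B x)
          + 4 * (\<Sum>i\<in>UNIV. complex_of_real (x$i) * radial_mult n G1 (db i u) B x)
      + of_nat (2 * CARD('m)) * radial_mult n G1 u B x
          + complex_of_real (4 * rsq x) * radial_mult n G2 u B x"
    unfolding bose_laplace_def step
    by (simp add: sum.distrib sum_distrib_left sum_distrib_right rsq_def algebra_simps)
  also have "(\<Sum>i\<in>UNIV. radial_mult n G (db i (db i u)) B x) = radial_mult n G (bose_laplace u) B x"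
    using radial_mult_sum[where I=UNIV and a="\<lambda>i y. 1" and w="\<lambda>i. db i (db i u)" and n=n and G=G
        and B=B and x=x] by (simp add: bose_laplace_def db_def)
  also have "(\<Sum>i\<in>UNIV. complex_of_real (x$i) * radial_mult n G1 (db i u) B x)
      = radial_mult n G1 (bose_euler u) B x"
    unfolding bose_euler_def db_def by (rule radial_mult_sum[symmetric])
  also have "complex_of_real (4 * rsq x) * radial_mult n G2 u B x
      = radial_mult n (\<lambda>l t. 4 * t * G2 l t) u B x"
    by (rule radial_mult_rsq[symmetric])
  finally show ?thesis .
qed

lemma bose_euler_cong_open:
  assumes "open \<Omega>" "x \<in> \<Omega>" "\<And>y. y \<in> \<Omega> \<Longrightarrow> w B y = w' B y"
  shows "bose_euler w B x = bose_euler w' B x"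
  unfolding bose_euler_def using pd_cong_open[OF assms(1,2), of "w B" "w' B"] assms(3) by simp

lemma bose_euler_add:
  assumes "w B differentiable (at x)" "w' B differentiable (at x)"
  shows "bose_euler (sf_add w w') B x = bose_euler w B x + bose_euler w' B x"
  unfolding bose_euler_def sf_add_def using pd_add[OF assms]
      by (simp add: sum.distrib algebra_simps)

lemma differentiable_bose_euler:
  assumes "u B differentiable (at x)" "\<forall>i. pd i (u B) differentiable (at x)"
  shows "bose_euler u B differentiable (at x)"
  unfolding bose_euler_def using assms differentiable_coord[of 1]
  by (intro differentiable_sum ballI differentiable_mult) auto

lemma super_euler_cong_open:
  assumes "open \<Omega>" "x \<in> \<Omega>" "\<And>B y. y \<in> \<Omega> \<Longrightarrow> w B y = w' B y"
  shows "super_euler n w A x = super_euler n w' A x"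
  using bose_euler_cong_open[OF assms(1,2), of w A w'] assms
  by (simp add: super_euler_eq sf_add_def fermi_degree_def)

lemma super_euler_add:
  assumes "a A differentiable (at x)" "b A differentiable (at x)"
  shows "super_euler n (sf_add a b) A x = super_euler n a A x + super_euler n b A x"
  using bose_euler_add[of a A x b, OF assms]
  by (simp add: super_euler_eq sf_add_def fermi_degree_def algebra_simps)

lemma differentiable_super_euler:
  assumes "u B differentiable (at x)" "\<forall>i. pd i (u B) differentiable (at x)"
  shows "super_euler n u B differentiable (at x)"
proof -
  have "super_euler n u B = (\<lambda>y. bose_euler u B y + of_nat (card (B \<inter> gens n)) * u B y)"
    by (intro ext) (simp add: super_euler_eq sf_add_def fermi_degree_def)
  then show ?thesis using differentiable_bose_euler[of u B x, OF assms] assms(1) by simp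
qed

lemma super_euler_radial_mult:
  assumes G: "\<forall>l\<le>n. (G l has_real_derivative G1 l (rsq x)) (at (rsq x))"
    and u: "\<forall>B'. u B' differentiable (at x)"
  shows "super_euler n (radial_mult n G u) B x = radial_mult n G (super_euler n u) B x
     + radial_mult n (\<lambda>l t. 2 * t * G1 l t + 2 * real l * G l t) u B x"
proof -
  have "super_euler n (radial_mult n G u) B x
      = bose_euler (radial_mult n G u) B x + fermi_degree n (radial_mult n G u) B x"
    by (simp add: super_euler_eq sf_add_def)
  also have "\<dots> = radial_mult n G (bose_euler u) B x + radial_mult n (\<lambda>l t. 2 * t * G1 l t) u B x
     + radial_mult n G (fermi_degree n u) B x + radial_mult n (\<lambda>l t. 2 * real l * G l t) u B x"
    using bose_euler_radial_mult[of n G G1 x u B, OF G u] fermi_degree_radial_mult[of n G u]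
        by (simp add: sf_add_def)
  also have "\<dots> = radial_mult n G (super_euler n u) B x
      + radial_mult n (\<lambda>l t. 2 * t * G1 l t + 2 * real l * G l t) u B x"
    by (simp add: super_euler_eq sf_add_def radial_mult_add radial_mult_coeffs_add[symmetric]
        algebra_simps)
  finally show ?thesis .
qed

lemma super_laplace_radial_mult:
  fixes u :: "'m::finite sfun"
  assumes "open \<Omega>" "x \<in> \<Omega>"
    and "\<forall>y\<in>\<Omega>. \<forall>l\<le>n. (G l has_real_derivative G1 l (rsq y)) (at (rsq y))"
    and "\<forall>l\<le>n. (G1 l has_real_derivative G2 l (rsq x)) (at (rsq x))"
    and "\<forall>y\<in>\<Omega>. \<forall>B'. u B' differentiable (at y)"
    and "\<forall>i B'. pd i (u B') differentiable (at x)"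
  shows "super_laplace n (radial_mult n G u) B x = radial_mult n G (super_laplace n u) B x
     + 4 * radial_mult n G1 (bose_euler u) B x
     + of_nat (2 * CARD('m)) * radial_mult n G1 u B x + radial_mult n (\<lambda>l t. 4 * t * G2 l t) u B x
     + 4 * radial_mult n (\<lambda>l t. G (l+1) t) (fermi_codegree n u) B x
     - 4 * radial_mult n (\<lambda>l t. real l * G (l+1) t) u B x"
proof -
  have "super_laplace n (radial_mult n G u) B x
      = bose_laplace (radial_mult n G u) B x + 4 * pair_contraction n (radial_mult n G u) B x"
    "radial_mult n G (super_laplace n u) B x
      = radial_mult n G (bose_laplace u) B x + 4 * radial_mult n G (pair_contraction n u) B x"
    by (simp_all add: super_laplace_eq sf_add_def sf_scale_def radial_mult_add radial_mult_cmult)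
  then show ?thesis
    unfolding bose_laplace_radial_mult[of \<Omega> x n G G1 G2 u B, OF assms] pair_contraction_radial_mult
    by (simp add: algebra_simps)
qed

section \<open>Commutation with the Laplace--Beltrami operator\<close>

lemma ck_on_2_differentiable:
  "ck_on 2 S g \<Longrightarrow> y \<in> S \<Longrightarrow> g differentiable (at y) \<and> (\<forall>i. pd i g differentiable (at y))"
  by (simp add: numeral_2_eq_2)

lemma ck_real_differentiable_funpow:
  "ck_real k S h \<Longrightarrow> j < k \<Longrightarrow> t \<in> S \<Longrightarrow> (deriv ^^ j) h differentiable (at t)"
proof (induction k arbitrary: h j)
  case (Suc k)
  show ?case
  proof (cases j)
    case (Suc j')
    then have "(deriv ^^ j') (deriv h) differentiable (at t)"
      using Suc.IH[of "deriv h" j'] Suc.prems by simp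
    then show ?thesis using Suc by (simp add: funpow_swap1)
  qed (use Suc.prems in simp)
qed simp

definition deriv_family :: "nat \<Rightarrow> (nat \<Rightarrow> real \<Rightarrow> real) \<Rightarrow> bool" where
  "deriv_family k p \<longleftrightarrow> (\<forall>l\<le>k. \<forall>t>0. (p l has_real_derivative - p (Suc l) t) (at t))"

lemma deriv_familyD:
  "deriv_family k p \<Longrightarrow> t > 0 \<Longrightarrow> \<forall>l\<le>k. (p l has_real_derivative - p (Suc l) t) (at t)"
  by (simp add: deriv_family_def)

lemma deriv_family_hR2_coeffs:
  assumes "ck_real (Suc k) {0<..} h"
  shows "deriv_family k (hR2_coeffs h)"
  unfolding deriv_family_def
proof (intro allI impI)
  fix l t assume "l \<le> k" "(t::real) > 0"
  then have "(deriv ^^ l) h differentiable (at t)"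
    using ck_real_differentiable_funpow[OF assms] by simp
  then have "((deriv ^^ l) h has_real_derivative deriv ((deriv ^^ l) h) t) (at t)"
    using DERIV_deriv_iff_real_differentiable by blast
  from DERIV_cmult[OF this, of "(-1) ^ l"]
  show "(hR2_coeffs h l has_real_derivative - hR2_coeffs h (Suc l) t) (at t)"
    by (simp add: hR2_coeffs_def[abs_def])
qed

lemma deriv_family_mono: "deriv_family k p \<Longrightarrow> j \<le> k \<Longrightarrow> deriv_family j p"
  by (simp add: deriv_family_def)

lemma deriv_family_shift:
  "deriv_family (Suc k) p \<Longrightarrow> l \<le> k \<Longrightarrow> t > 0 \<Longrightarrow>
    ((\<lambda>t. - p (Suc l) t) has_real_derivative p (Suc (Suc l)) t) (at t)"
  using DERIV_minus[of "p (Suc l)" "- p (Suc (Suc l)) t" t] by (simp add: deriv_family_def)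

text \<open>The coefficient family of \<open>[E, p(R\<^sup>2)] = 2 R\<^sup>2 p'(R\<^sup>2)\<close>.\<close>

definition euler_coeffs :: "(nat \<Rightarrow> real \<Rightarrow> real) \<Rightarrow> nat \<Rightarrow> real \<Rightarrow> real" where
  "euler_coeffs p l t = 2 * real l * p l t - 2 * t * p (Suc l) t"

lemma deriv_family_euler_coeffs:
  assumes "deriv_family (Suc k) p"
  shows "deriv_family k (euler_coeffs p)"
  unfolding deriv_family_def
proof (intro allI impI)
  fix l t assume l: "l \<le> k" and t: "(t::real) > 0"
  have "(p l has_real_derivative - p (Suc l) t) (at t)"
    "(p (Suc l) has_real_derivative - p (Suc (Suc l)) t) (at t)"
    using assms l t by (simp_all add: deriv_family_def)
  from DERIV_diff[OF DERIV_cmult[OF this(1), of "2 * real l"]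
      DERIV_mult[OF DERIV_cmult[OF DERIV_ident, of 2] this(2)]]
  show "(euler_coeffs p l has_real_derivative - euler_coeffs p (Suc l) t) (at t)"
    unfolding euler_coeffs_def[abs_def] by (simp add: algebra_simps)
qed

lemma super_euler_radial_mult_family:
  assumes "deriv_family n p" "rsq x > 0" "\<forall>B. u B differentiable (at x)"
  shows "super_euler n (radial_mult n p u) B x
    = radial_mult n p (super_euler n u) B x + radial_mult n (euler_coeffs p) u B x"
proof -
  have "\<forall>l\<le>n. (p l has_real_derivative - p (Suc l) (rsq x)) (at (rsq x))"
    using assms(1,2) by (simp add: deriv_family_def)
  from super_euler_radial_mult[of n p "\<lambda>l t. - p (Suc l) t", OF this assms(3)]
  show ?thesis by (simp add: euler_coeffs_def[abs_def] algebra_simps)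
qed

definition laplace_commutator :: "nat \<Rightarrow> (nat \<Rightarrow> real \<Rightarrow> real) \<Rightarrow> 'm::finite sfun \<Rightarrow> 'm sfun" where
  "laplace_commutator n p u = (\<lambda>B x.
       4 * radial_mult n (\<lambda>l t. - p (Suc l) t) (bose_euler u) B x
     + of_nat (2 * CARD('m)) * radial_mult n (\<lambda>l t. - p (Suc l) t) u B x
     + radial_mult n (\<lambda>l t. 4 * t * p (Suc (Suc l)) t) u B x
     + 4 * radial_mult n (\<lambda>l t. p (l+1) t) (fermi_codegree n u) B x
     - 4 * radial_mult n (\<lambda>l t. real l * p (l+1) t) u B x)"

lemma super_laplace_radial_mult_family:
  fixes u :: "'m::finite sfun"
  assumes "open \<Omega>" "x \<in> \<Omega>" "\<forall>y\<in>\<Omega>. rsq y > 0" "deriv_family (Suc n) p"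
    and "\<forall>y\<in>\<Omega>. \<forall>B. u B differentiable (at y)" "\<forall>i B. pd i (u B) differentiable (at x)"
  shows "super_laplace n (radial_mult n p u) B x
    = radial_mult n p (super_laplace n u) B x + laplace_commutator n p u B x"
proof -
  have "\<forall>y\<in>\<Omega>. \<forall>l\<le>n. (p l has_real_derivative - p (Suc l) (rsq y)) (at (rsq y))"
    using assms(3,4) by (simp add: deriv_family_def)
  moreover have "\<forall>l\<le>n. ((\<lambda>t. - p (Suc l) t) has_real_derivative p (Suc (Suc l)) (rsq x))
      (at (rsq x))"
    using deriv_family_shift[OF assms(4)] assms(2,3) by blast
  ultimately show ?thesis
    using super_laplace_radial_mult[of \<Omega> x n p "\<lambda>l t. - p (Suc l) t" "\<lambda>l t. p (Suc (Suc l)) t" u B,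
        OF assms(1,2) _ _ assms(5,6)]
    by (simp add: laplace_commutator_def)
qed

lemma differentiable_radial_mult_family:
  "deriv_family n p \<Longrightarrow> rsq x > 0 \<Longrightarrow> \<forall>B. u B differentiable (at x) \<Longrightarrow>
    radial_mult n p u B differentiable (at x)"
  using differentiable_radial_mult[of n p "\<lambda>l t. - p (Suc l) t" x u B] by (simp add: deriv_familyD)

lemma super_euler_shift_radial_mult:
  fixes u :: "'m::finite sfun"
  assumes "open \<Omega>" "x \<in> \<Omega>" "\<forall>y\<in>\<Omega>. rsq y > 0" "deriv_family (Suc n) p"
    and du: "\<forall>y\<in>\<Omega>. \<forall>B. u B differentiable (at y) \<and> (\<forall>i. pd i (u B) differentiable (at y))"
  shows "super_euler n
      (sf_add (sf_scale c (radial_mult n p u)) (super_euler n (radial_mult n p u))) A x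
    = radial_mult n p (super_euler n (sf_add (sf_scale c u) (super_euler n u))) A x
      + radial_mult n (euler_coeffs p) (\<lambda>B y. c * u B y + 2 * super_euler n u B y) A x
      + radial_mult n (euler_coeffs (euler_coeffs p)) u A x"
proof -
  let ?W = "\<lambda>v. sf_add (sf_scale c v) (super_euler n v)"
  have p: "deriv_family n p" using deriv_family_mono[OF assms(4)] by simp
  have ep: "deriv_family n (euler_coeffs p)" by (rule deriv_family_euler_coeffs[OF assms(4)])
  have x: "rsq x > 0" "\<forall>B. u B differentiable (at x)" "\<forall>B. ?W u B differentiable (at x)"
    using assms(2,3) du differentiable_super_euler[of u _ x n]
    by (auto simp: sf_add_def sf_scale_def)
  have "?W (radial_mult n p u) B y
      = sf_add (radial_mult n p (?W u)) (radial_mult n (euler_coeffs p) u) B y"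
    if "y \<in> \<Omega>" for B y
    using super_euler_radial_mult_family[OF p, of y u B] assms(3) du that
    by (simp add: sf_add_def sf_scale_def radial_mult_add radial_mult_cmult algebra_simps)
  then have "super_euler n (?W (radial_mult n p u)) A x
      = super_euler n (sf_add (radial_mult n p (?W u)) (radial_mult n (euler_coeffs p) u)) A x"
    by (intro super_euler_cong_open[OF assms(1,2)])
  also have "\<dots> = super_euler n (radial_mult n p (?W u)) A x
      + super_euler n (radial_mult n (euler_coeffs p) u) A x"
    using x by (intro super_euler_add differentiable_radial_mult_family p ep)
  also have "\<dots> = radial_mult n p (super_euler n (?W u)) A x
      + radial_mult n (euler_coeffs p) (?W u) A x
      + radial_mult n (euler_coeffs p) (super_euler n u) A x
          + radial_mult n (euler_coeffs (euler_coeffs p)) u A x"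
    using super_euler_radial_mult_family[OF p x(1,3)] super_euler_radial_mult_family[OF ep x(1,2)]
        by simp
  finally show ?thesis
    by (simp add: sf_add_def sf_scale_def radial_mult_add radial_mult_cmult algebra_simps)
qed

text \<open>The identity behind the theorem, checked coefficientwise:
  \<open>R\<^sup>2 [\<nabla>\<^sup>2, h(R\<^sup>2)] = [E, h(R\<^sup>2)] (M - 2 + 2E) + [E, [E, h(R\<^sup>2)]]\<close>.\<close>

lemma laplace_commutator_cancel:
  fixes u :: "'m::finite sfun"
  shows "complex_of_real (rsq x) * laplace_commutator n p u A x
      - radial_mult n xgsq_coeffs (laplace_commutator n p u) A x
    = radial_mult n (euler_coeffs p)
        (\<lambda>B y. of_int (int CARD('m) - 2 * int n - 2) * u B y + 2 * super_euler n u B y) A x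
      + radial_mult n (euler_coeffs (euler_coeffs p)) u A x"
proof (cases "finite A")
  case True
  have H: "\<And>K g. radial_mult n K g A x
      = (\<Sum>J\<in>pair_subsets n A. complex_of_real (K (card J) (rsq x)) * g (A - gen_pairs J) x)"
    using True by (simp add: radial_mult_def)
  have "radial_mult n xgsq_coeffs (laplace_commutator n p u) A x =
       4 * radial_mult n (xgsq_mult_coeffs (\<lambda>l t. - p (Suc l) t)) (bose_euler u) A x
     + of_nat (2 * CARD('m)) * radial_mult n (xgsq_mult_coeffs (\<lambda>l t. - p (Suc l) t)) u A x
     + radial_mult n (xgsq_mult_coeffs (\<lambda>l t. 4 * t * p (Suc (Suc l)) t)) u A x
     + 4 * radial_mult n (xgsq_mult_coeffs (\<lambda>l t. p (l+1) t)) (fermi_codegree n u) A x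
     - 4 * radial_mult n (xgsq_mult_coeffs (\<lambda>l t. real l * p (l+1) t)) u A x"
    unfolding laplace_commutator_def
    by (simp only: radial_mult_add radial_mult_diff radial_mult_cmult radial_mult_xgsq_left)
  then show ?thesis
    unfolding laplace_commutator_def H
    apply (simp only: sum_distrib_left sum.distrib[symmetric] sum_subtractf[symmetric])
    apply (rule sum.cong[OF refl])
    subgoal for J
      by (cases "card J")
        (simp_all add: xgsq_mult_coeffs_def euler_coeffs_def fermi_codegree_def super_euler_eq
          sf_add_def fermi_degree_def algebra_simps)
    done
qed (simp add: radial_mult_def laplace_commutator_def)

lemma laplace_beltrami_radial_mult:
  fixes u :: "'m::finite sfun"
  assumes "open \<Omega>" "0 \<notin> \<Omega>" "x \<in> \<Omega>" "deriv_family (Suc n) p" "\<forall>B. ck_on 2 \<Omega> (u B)"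
  shows "laplace_beltrami n (radial_mult n p u) A x = radial_mult n p (laplace_beltrami n u) A x"
proof -
  define c :: complex where "c = of_int (int CARD('m) - 2 * int n - 2)"
  let ?W = "\<lambda>v. sf_add (sf_scale c v) (super_euler n v)"
  let ?C = "laplace_commutator n p u"
  let ?S = "radial_mult n p (super_laplace n u)"
  have pos: "\<forall>y\<in>\<Omega>. rsq y > 0" using assms(2) rsq_pos by metis
  have du: "\<forall>y\<in>\<Omega>. \<forall>B. u B differentiable (at y) \<and> (\<forall>i. pd i (u B) differentiable (at y))"
    using assms(5) ck_on_2_differentiable by blast
  have SL: "super_laplace n (radial_mult n p u) B x = ?S B x + ?C B x" for B
    using super_laplace_radial_mult_family[OF assms(1,3) pos assms(4)] du assms(3) by blast
  have "radial_mult n xgsq_coeffs (super_laplace n (radial_mult n p u)) A x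
      = radial_mult n xgsq_coeffs (\<lambda>B y. ?S B y + ?C B y) A x"
    by (rule radial_mult_cong) (rule SL)
  also have "\<dots> = radial_mult n (xgsq_mult_coeffs p) (super_laplace n u) A x
      + radial_mult n xgsq_coeffs ?C A x"
    by (simp only: radial_mult_add radial_mult_xgsq_left)
  finally have xgsq_SL: "radial_mult n xgsq_coeffs (super_laplace n (radial_mult n p u)) A x
      = radial_mult n (xgsq_mult_coeffs p) (super_laplace n u) A x
          + radial_mult n xgsq_coeffs ?C A x" .
  note SE = super_euler_shift_radial_mult[OF assms(1,3) pos assms(4) du, of c A]
  note cancel = laplace_commutator_cancel[of x n p u A, folded c_def]
  have "laplace_beltrami n (radial_mult n p u) A x
     = complex_of_real (rsq x) * (?S A x + ?C A x)
       - (radial_mult n (xgsq_mult_coeffs p) (super_laplace n u) A x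
           + radial_mult n xgsq_coeffs ?C A x)
       - super_euler n (?W (radial_mult n p u)) A x"
    unfolding laplace_beltrami_eq c_def[symmetric] SL xgsq_SL ..
  also have "\<dots> = complex_of_real (rsq x) * ?S A x
       - radial_mult n (xgsq_mult_coeffs p) (super_laplace n u) A x
       - radial_mult n p (super_euler n (?W u)) A x
     + ((complex_of_real (rsq x) * ?C A x - radial_mult n xgsq_coeffs ?C A x)
       - (radial_mult n (euler_coeffs p) (\<lambda>B y. c * u B y + 2 * super_euler n u B y) A x
          + radial_mult n (euler_coeffs (euler_coeffs p)) u A x))"
    unfolding SE by (simp add: algebra_simps)
  also have "\<dots> = complex_of_real (rsq x) * ?S A x
       - radial_mult n (xgsq_mult_coeffs p) (super_laplace n u) A x
       - radial_mult n p (super_euler n (?W u)) A x"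
    unfolding cancel by simp
  also have "\<dots> = radial_mult n p (laplace_beltrami n u) A x"
    unfolding laplace_beltrami_eq[abs_def] c_def[symmetric]
    by (simp only: radial_mult_diff radial_mult_rsq_left radial_mult_xgsq_right)
  finally show ?thesis .
qed

theorem lemma11:
  fixes n :: nat and \<Omega> :: "(real^'m::finite) set"
    and h :: "real \<Rightarrow> real" and f :: "'m sfun"
  assumes "open \<Omega>" and "0 \<notin> \<Omega>"
    and "ck_real (n + 2) {0<..} h"
    and "wf_sfun n f" and "\<forall>A. ck_on 2 \<Omega> (f A)"
  shows "\<forall>A. \<forall>x\<in>\<Omega>.
    laplace_beltrami n (sf_mult (hR2 n h) f) A x = sf_mult (hR2 n h) (laplace_beltrami n f) A x"
proof (intro allI ballI)
  fix A x assume "x \<in> \<Omega>"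
  moreover have "deriv_family (Suc n) (hR2_coeffs h)"
    using deriv_family_hR2_coeffs[of "Suc n" h] assms(3) by simp
  ultimately show "laplace_beltrami n (sf_mult (hR2 n h) f) A x
      = sf_mult (hR2 n h) (laplace_beltrami n f) A x"
    unfolding sf_mult_hR2 by (rule laplace_beltrami_radial_mult[OF assms(1,2) _ _ assms(5)])
qed

end
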